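(* Let $L$ be an infinite set and consider the edged cube $\bar Q_L$. A basic sequence is convergent over $f_{\mathrm{solved}}$ if and only if it is universally convergent; consequently the set of basic sequences convergent over $f_{\mathrm{solved}}$, taken modulo $\sim$, is exactly the group $\mathrm{UC}_L=\mathrm{uc}_L/{\sim}$ under the operation induced by concatenation. In particular, let $k=\operatorname{lcm}\{\text{order of }\pi:\pi\in S_{24}\}$; if $f$ is the (legal) terminal configuration obtained by applying a basic sequence of length $\theta$ to $f_{\mathrm{solved}}$, then there is a basic sequence of length at most $\theta\cdot(k-1)$ (ordinal product) which, applied to $f$, has terminal configuration $f_{\mathrm{solved}}$.
   Context: Let $L$ be an infinite set, $-L=\{-r:r\in L\}$ a disjoint copy of $L$, and $0$ a new element; $L^\dagger=-L\cup\{0\}\cup L$ with $-(-r)=r$, $-0=0$. Adjoin $\pm\infty$ with $-(+\infty)=-\infty$ and set $\bar L^\dagger=L^\dagger\cup\{\pm\infty\}$. Points of $U=(\bar L^\dagger)^3$ have coordinates $x,y,z$. The edged cube $\bar Q_L$ is the set of cells $(p,i)$ with $p\in U$, $i\in\{x,y,z\}$, $p_i\in\{\pm\infty\}$ ($i$ marks the face of the cell). For $i\in\{x,y,z\}$, $\alpha\in\bar L^\dagger$, the quarter-turn twist $T_{i,\alpha}$ is the permutation of cells fixing every cell whose point $p$ has $p_i\ne\alpha$ and acting on the others by the rotation $T_{x,\alpha}(\alpha,y,z)=(\alpha,-z,y)$, $T_{y,\alpha}(x,\alpha,z)=(z,\alpha,-x)$, $T_{z,\alpha}(x,y,\alpha)=(-y,x,\alpha)$,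 the marked coordinate being carried along by the rotation. Basic twists are $T,T^2,T^3$ for quarter-turn twists $T$. A basic sequence is a sequence $\langle\sigma_\eta:\eta<\theta\rangle$ of basic twists of ordinal length $\theta$. A labelling is a map $f$ from cells to $X\cup\{\mathrm{NaC}\}$ for a set $X\not\ni\mathrm{NaC}$; it is legal if it never takes value NaC; a configuration is a labelling with $X$ the six colors red, white, green, orange, yellow, blue. The solved configuration $f_{\mathrm{solved}}$ colors cell $(p,i)$ red, blue, white, orange, green, yellow according as $p_i=+\infty$ with $i=x,y,z$, or $p_i=-\infty$ with $i=x,y,z$, respectively. A twist $\sigma$ acts by $(\sigma f)(c)=f(\sigma^{-1}c)$. Applying $\langle\sigma_\eta:\eta<\theta\rangle$ to $f_0$ produces $f_{\eta+1}=\sigma_\eta f_\eta$, and for limit $\lambda\le\theta$, $f_\lambda(c)$ is the eventually constant value of $f_\eta(c)$ ($\eta<\lambda$) if it exists and NaC otherwise; $f_\theta$ is the terminal labelling. The sequence is convergent over $f_0$ if $f_\theta$ is legal, and universally convergent if it is convergent over the identity labelling (each cell labelled by itself). $\vec\sigma\sim\vec\tau$ iff they give the same terminal configuration from every configuration. $\mathrm{uc}_L$ is the set of universally convergent basic sequences under concatenation ($\vec\tau\vec\sigma$ means $\vec\sigma$ then $\vec\tau$), and $\mathrm{UC}_L=\mathrm{uc}_L/{\sim}$. *)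

theory Defs
  imports Main "HOL-Combinatorics.Permutations"
begin

text \<open>Elements of the extended coordinate set: -L, 0, L, +infinity, -infinity.
  The set L itself is modelled by the type 'l (assumed infinite in the theorem).\<close>
datatype 'l coord = Neg 'l | Zero | Pos 'l | PInf | MInf

fun cneg :: "'l coord \<Rightarrow> 'l coord" where
  "cneg (Neg a) = Pos a"
| "cneg Zero = Zero"
| "cneg (Pos a) = Neg a"
| "cneg PInf = MInf"
| "cneg MInf = PInf"

datatype axis = AX | AY | AZ

type_synonym 'l point = "'l coord \<times> 'l coord \<times> 'l coord"

fun coord_of :: "axis \<Rightarrow> 'l point \<Rightarrow> 'l coord" where
  "coord_of AX (x, y, z) = x"
| "coord_of AY (x, y, z) = y"
| "coord_of AZ (x, y, z) = z"

typedef 'l cell = "{(p, i). coord_of i (p :: 'l point) \<in> {PInf, MInf}}"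
  by (rule exI[of _ "((PInf, Zero, Zero), AX)"]) simp

fun rot_raw :: "axis \<Rightarrow> 'l coord \<Rightarrow> 'l point \<times> axis \<Rightarrow> 'l point \<times> axis" where
  "rot_raw AX a ((x, y, z), m) =
     (if x = a then ((x, cneg z, y), (case m of AX \<Rightarrow> AX | AY \<Rightarrow> AZ | AZ \<Rightarrow> AY))
      else ((x, y, z), m))"
| "rot_raw AY a ((x, y, z), m) =
     (if y = a then ((z, y, cneg x), (case m of AX \<Rightarrow> AZ | AY \<Rightarrow> AY | AZ \<Rightarrow> AX))
      else ((x, y, z), m))"
| "rot_raw AZ a ((x, y, z), m) =
     (if z = a then ((cneg y, x, z), (case m of AX \<Rightarrow> AY | AY \<Rightarrow> AX | AZ \<Rightarrow> AZ))
      else ((x, y, z), m))"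

definition quarter_turn :: "axis \<Rightarrow> 'l coord \<Rightarrow> 'l cell \<Rightarrow> 'l cell" where
  "quarter_turn i a = (\<lambda>c. Abs_cell (rot_raw i a (Rep_cell c)))"

definition basic_twists :: "('l cell \<Rightarrow> 'l cell) set" where
  "basic_twists = {quarter_turn i a ^^ n | i a n. n \<in> {1, 2, 3}}"

text \<open>A labelling with values in X \<union> {NaC}: None plays the role of NaC.\<close>
type_synonym ('l, 'x) labelling = "'l cell \<Rightarrow> 'x option"

definition legal :: "('l, 'x) labelling \<Rightarrow> bool" where
  "legal f \<longleftrightarrow> (\<forall>c. f c \<noteq> None)"

datatype color = Red | White | Green | Orange | Yellow | Blue

definition solved_raw :: "'l point \<times> axis \<Rightarrow> color" where
  "solved_raw pc = (case pc of (p, i) \<Rightarrow>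
     if coord_of i p = PInf then (case i of AX \<Rightarrow> Red | AY \<Rightarrow> Blue | AZ \<Rightarrow> White)
     else (case i of AX \<Rightarrow> Orange | AY \<Rightarrow> Green | AZ \<Rightarrow> Yellow))"

definition f_solved :: "('l, color) labelling" where
  "f_solved c = Some (solved_raw (Rep_cell c))"

definition id_labelling :: "('l, 'l cell) labelling" where
  "id_labelling c = Some c"

definition act :: "('l cell \<Rightarrow> 'l cell) \<Rightarrow> ('l, 'x) labelling \<Rightarrow> ('l, 'x) labelling" where
  "act s f = (\<lambda>c. f (inv s c))"

text \<open>A sequence of ordinal length theta is given by a well-order r (non-strict,
  as in Main) whose field is the index set, together with sigma on Field r.\<close>
definition basic_seq :: "'i rel \<Rightarrow> ('i \<Rightarrow> 'l cell \<Rightarrow> 'l cell) \<Rightarrow> bool" where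
  "basic_seq r \<sigma> \<longleftrightarrow> Well_order r \<and> (\<forall>\<eta>\<in>Field r. \<sigma> \<eta> \<in> basic_twists)"

text \<open>For S with a largest element this is just the value at that element.\<close>
definition ev_lim :: "'i rel \<Rightarrow> 'i set \<Rightarrow> ('i \<Rightarrow> ('l, 'x) labelling)
     \<Rightarrow> ('l, 'x) labelling \<Rightarrow> ('l, 'x) labelling" where
  "ev_lim r S G d = (\<lambda>c.
     if S = {} then d c
     else if (\<exists>v. \<exists>\<zeta>0\<in>S. \<forall>\<zeta>\<in>S. (\<zeta>0, \<zeta>) \<in> r \<longrightarrow> G \<zeta> c = v)
     then (THE v. \<exists>\<zeta>0\<in>S. \<forall>\<zeta>\<in>S. (\<zeta>0, \<zeta>) \<in> r \<longrightarrow> G \<zeta> c = v)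
     else None)"

text \<open>F eta is the labelling f_eta just before sigma_eta is applied; so
  act (sigma zeta) (F zeta) is f_{zeta+1}.\<close>
definition is_run :: "'i rel \<Rightarrow> ('i \<Rightarrow> 'l cell \<Rightarrow> 'l cell) \<Rightarrow> ('l, 'x) labelling
     \<Rightarrow> ('i \<Rightarrow> ('l, 'x) labelling) \<Rightarrow> bool" where
  "is_run r \<sigma> f0 F \<longleftrightarrow>
     (\<forall>\<eta>\<in>Field r. F \<eta> = ev_lim r (underS r \<eta>) (\<lambda>\<zeta>. act (\<sigma> \<zeta>) (F \<zeta>)) f0)"

definition terminal :: "'i rel \<Rightarrow> ('i \<Rightarrow> 'l cell \<Rightarrow> 'l cell) \<Rightarrow> ('l, 'x) labelling
     \<Rightarrow> ('l, 'x) labelling" where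
  "terminal r \<sigma> f0 =
     (THE T. \<exists>F. is_run r \<sigma> f0 F \<and> T = ev_lim r (Field r) (\<lambda>\<zeta>. act (\<sigma> \<zeta>) (F \<zeta>)) f0)"

definition convergent_over :: "'i rel \<Rightarrow> ('i \<Rightarrow> 'l cell \<Rightarrow> 'l cell) \<Rightarrow> ('l, 'x) labelling \<Rightarrow> bool" where
  "convergent_over r \<sigma> f0 \<longleftrightarrow> legal (terminal r \<sigma> f0)"

definition universally_convergent :: "'i rel \<Rightarrow> ('i \<Rightarrow> 'l cell \<Rightarrow> 'l cell) \<Rightarrow> bool" where
  "universally_convergent r \<sigma> \<longleftrightarrow> convergent_over r \<sigma> id_labelling"

text \<open>The ordinal product theta * m for a natural number m: the order type of
  {0..<m} x Field r ordered lexicographically with the natural-number component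
  most significant (theta + theta + ... , m times).\<close>
definition ord_mult_nat :: "'i rel \<Rightarrow> nat \<Rightarrow> ('i \<times> nat) rel" where
  "ord_mult_nat r m = {((a, i), (b, j)). a \<in> Field r \<and> b \<in> Field r \<and> i < m \<and> j < m \<and>
                          (i < j \<or> (i = j \<and> (a, b) \<in> r))}"

definition perm_order :: "(nat \<Rightarrow> nat) \<Rightarrow> nat" where
  "perm_order \<pi> = (LEAST n. 0 < n \<and> \<pi> ^^ n = id)"

definition k24 :: nat where
  "k24 = Lcm {perm_order \<pi> | \<pi>. \<pi> permutes {1..24::nat}}"

end

theory Submission
  imports Defs "HOL-Combinatorics.Cycles"
begin

text \<open>Run a basic sequence over the identity labelling alongside. While that run stays legal it
  records a permutation \<open>\<rho>\<close> of the cells that moves every cubie rigidly within its orbit of at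
  most 24 cells, and the run over any labelling \<open>g\<close> is \<open>g \<circ> \<rho>\<close>. A NaC can only arise at a limit
  stage where some cell is moved cofinally, hence by one fixed twist \<open>T\<close> applied cofinally. If
  the run over \<open>f_solved\<close> converges there, then \<open>f_solved \<circ> \<rho>\<close> is \<open>T\<close>-invariant on a ring of
  edge cells, which no orientation preserving motion of the cubies allows. So convergence over
  \<open>f_solved\<close> gives universal convergence; the terminal permutation \<open>\<rho>\<close> permutes each orbit, so
  \<open>\<rho>\<^bsup>k24\<^esup> = id\<close>, and running the sequence \<open>k24 - 1\<close> more times restores \<open>f_solved\<close>.\<close>

lemma cneg_cneg [simp]: "cneg (cneg v) = v"
  by (cases v) auto

lemma cneg_eq_iff [simp]: "cneg v = cneg w \<longleftrightarrow> v = w"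
  by (metis cneg_cneg)

lemma cneg_eq_PInf_iff [simp]: "cneg v = PInf \<longleftrightarrow> v = MInf"
  and cneg_eq_MInf_iff [simp]: "cneg v = MInf \<longleftrightarrow> v = PInf"
  by (cases v; simp)+

lemma axis_UNIV: "(UNIV :: axis set) = {AX, AY, AZ}"
  using axis.exhaust by blast

definition is_cell :: "'l point \<times> axis \<Rightarrow> bool" where
  "is_cell pc \<longleftrightarrow> coord_of (snd pc) (fst pc) \<in> {PInf, MInf}"

lemma is_cell_Rep_cell: "is_cell (Rep_cell c)"
  using Rep_cell[of c] by (auto simp: is_cell_def split: prod.splits)

lemma Rep_cell_Abs_cell: "is_cell pc \<Longrightarrow> Rep_cell (Abs_cell pc) = pc"
  by (rule Abs_cell_inverse) (auto simp: is_cell_def split: prod.splits)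

abbreviation point_of :: "'l cell \<Rightarrow> 'l point" where
  "point_of c \<equiv> fst (Rep_cell c)"

definition layer_turn :: "axis \<Rightarrow> 'l point \<times> axis \<Rightarrow> 'l point \<times> axis" where
  "layer_turn j pc = rot_raw j (coord_of j (fst pc)) pc"

lemma rot_raw_eq: "rot_raw j a pc = (if coord_of j (fst pc) = a then layer_turn j pc else pc)"
  by (cases j; cases pc; auto simp: layer_turn_def)

lemma is_cell_layer_turn: "is_cell pc \<Longrightarrow> is_cell (layer_turn j pc)"
  by (cases j; cases pc; auto simp: layer_turn_def is_cell_def split: axis.splits)

lemma coord_of_layer_turn [simp]: "coord_of j (fst (layer_turn j pc)) = coord_of j (fst pc)"
  by (cases j; cases pc; auto simp: layer_turn_def)

lemma fst_layer_turn: "fst (layer_turn j (p, m)) = fst (layer_turn j (p, m'))"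
  by (cases j; cases p) (auto simp: layer_turn_def)

lemma layer_turn_4: "layer_turn j (layer_turn j (layer_turn j (layer_turn j pc))) = pc"
  by (cases j; cases pc; auto simp: layer_turn_def split: axis.splits)

definition cell_turn :: "axis \<Rightarrow> 'l cell \<Rightarrow> 'l cell" where
  "cell_turn j c = Abs_cell (layer_turn j (Rep_cell c))"

lemma Rep_cell_turn: "Rep_cell (cell_turn j c) = layer_turn j (Rep_cell c)"
  unfolding cell_turn_def by (rule Rep_cell_Abs_cell[OF is_cell_layer_turn[OF is_cell_Rep_cell]])

lemma cell_turn_4: "cell_turn j (cell_turn j (cell_turn j (cell_turn j c))) = c"
  by (metis Rep_cell_inject Rep_cell_turn layer_turn_4)

lemma quarter_turn_eq:
  "quarter_turn j a c = (if coord_of j (point_of c) = a then cell_turn j c else c)"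
  by (metis Rep_cell_inverse Rep_cell_turn cell_turn_def quarter_turn_def rot_raw_eq)

lemma quarter_turn_pow:
  "(quarter_turn j a ^^ n) c = (if coord_of j (point_of c) = a then (cell_turn j ^^ n) c else c)"
proof (induction n)
  case (Suc n)
  have "coord_of j (point_of ((cell_turn j ^^ n) c)) = coord_of j (point_of c)"
    by (induction n) (simp_all add: Rep_cell_turn)
  with Suc show ?case
    by (simp add: quarter_turn_eq)
qed simp

lemma quarter_turn_pow_4: "quarter_turn j (a :: 'l coord) ^^ 4 = id"
proof
  fix c :: "'l cell"
  have "(cell_turn j ^^ 4) c = c"
    by (simp add: numeral_eq_Suc cell_turn_4)
  then show "(quarter_turn j a ^^ 4) c = id c"
    unfolding quarter_turn_pow by simp
qed

lemma quarter_turn_pow_mod_4: "quarter_turn j a ^^ (n mod 4) = quarter_turn j a ^^ n"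
  by (rule ext) (simp add: funpow_mod_eq quarter_turn_pow_4)

lemma inv_quarter_turn_pow:
  assumes "n \<le> 4"
  shows "inv (quarter_turn j a ^^ n) = quarter_turn j a ^^ (4 - n)"
proof (rule inv_unique_comp)
  show "quarter_turn j a ^^ n \<circ> quarter_turn j a ^^ (4 - n) = id"
    and "quarter_turn j a ^^ (4 - n) \<circ> quarter_turn j a ^^ n = id"
    using assms by (simp_all add: funpow_add[symmetric] quarter_turn_pow_4)
qed

lemma bij_quarter_turn: "bij (quarter_turn j a)"
proof (rule o_bij[of "quarter_turn j a ^^ 3"])
  show "quarter_turn j a ^^ 3 \<circ> quarter_turn j a = id"
    using funpow_add[of 3 1 "quarter_turn j a"] by (simp add: quarter_turn_pow_4)
  show "quarter_turn j a \<circ> quarter_turn j a ^^ 3 = id"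
    using funpow_add[of 1 3 "quarter_turn j a"] by (simp add: quarter_turn_pow_4)
qed

lemma basic_twistsE:
  assumes "s \<in> basic_twists"
  obtains j a n where "s = quarter_turn j a ^^ n" "n \<in> {1, 2, 3}"
  using assms unfolding basic_twists_def by blast

lemma bij_basic_twist: "s \<in> basic_twists \<Longrightarrow> bij s"
  by (metis basic_twistsE bij_quarter_turn bij_fn)

lemma inv_basic_twist:
  assumes "s \<in> basic_twists"
  obtains j a m where "inv s = quarter_turn j a ^^ m"
proof -
  obtain j a n where "s = quarter_turn j a ^^ n" "n \<in> {1, 2, 3}"
    using assms by (rule basic_twistsE)
  then have "inv s = quarter_turn j a ^^ (4 - n)"
    using inv_quarter_turn_pow[of n j a] by auto
  then show thesis
    by (rule that)
qed

definition twists_moving :: "'l cell \<Rightarrow> ('l cell \<Rightarrow> 'l cell) set" where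
  "twists_moving c = {quarter_turn j (coord_of j (point_of c)) ^^ n | j n. n \<in> {1, 2, 3}}"

lemma finite_twists_moving: "finite (twists_moving c)"
proof -
  have "twists_moving c = (\<lambda>(j, n). quarter_turn j (coord_of j (point_of c)) ^^ n) ` (UNIV \<times> {1, 2, 3})"
    unfolding twists_moving_def by auto
  then show ?thesis
    by (simp add: axis_UNIV)
qed

lemma basic_twist_moving:
  assumes "s \<in> basic_twists" "s c \<noteq> c"
  shows "s \<in> twists_moving c"
  using assms by (elim basic_twistsE) (auto simp: twists_moving_def quarter_turn_pow split: if_splits)

subsection \<open>Rotations of the cube\<close>

fun third_axis :: "axis \<Rightarrow> axis \<Rightarrow> axis" where
  "third_axis AX AY = AZ" | "third_axis AY AX = AZ" | "third_axis AX AZ = AY"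
| "third_axis AZ AX = AY" | "third_axis AY AZ = AX" | "third_axis AZ AY = AX"
| "third_axis a b = a"

fun cyclic :: "axis \<Rightarrow> axis \<Rightarrow> bool" where
  "cyclic AX AY = True" | "cyclic AY AZ = True" | "cyclic AZ AX = True" | "cyclic a b = False"

definition signed :: "bool \<Rightarrow> 'l coord \<Rightarrow> 'l coord" where
  "signed s v = (if s then v else cneg v)"

text \<open>A rotation \<open>(a, sa, b, sb)\<close> moves the \<open>x\<close>-coordinate to axis \<open>a\<close> with sign \<open>sa\<close> and the
  \<open>y\<close>-coordinate to axis \<open>b\<close> with sign \<open>sb\<close>; the sign of the \<open>z\<close>-coordinate is then forced
  by orientation.\<close>
type_synonym rotation = "axis \<times> bool \<times> axis \<times> bool"

definition rotations :: "rotation set" where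
  "rotations = {(a, sa, b, sb). a \<noteq> b}"

definition rotation_sign :: "rotation \<Rightarrow> bool" where
  "rotation_sign R = (case R of (a, sa, b, sb) \<Rightarrow> ((sa = sb) = cyclic a b))"

definition place :: "axis \<Rightarrow> 'l coord \<Rightarrow> axis \<Rightarrow> 'l coord \<Rightarrow> 'l coord \<Rightarrow> 'l point" where
  "place a va b vb vc = (let v = (\<lambda>k. if k = a then va else if k = b then vb else vc)
     in (v AX, v AY, v AZ))"

fun rotate :: "rotation \<Rightarrow> 'l point \<times> axis \<Rightarrow> 'l point \<times> axis" where
  "rotate (a, sa, b, sb) ((x, y, z), m) =
     (place a (signed sa x) b (signed sb y) (signed (rotation_sign (a, sa, b, sb)) z),
      (case m of AX \<Rightarrow> a | AY \<Rightarrow> b | AZ \<Rightarrow> third_axis a b))"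

fun turn_rotation :: "rotation \<Rightarrow> axis \<Rightarrow> rotation" where
  "turn_rotation (a, sa, b, sb) AX = (a, sa, third_axis a b, rotation_sign (a, sa, b, sb))"
| "turn_rotation (a, sa, b, sb) AY = (third_axis a b, \<not> rotation_sign (a, sa, b, sb), b, sb)"
| "turn_rotation (a, sa, b, sb) AZ = (b, sb, a, \<not> sa)"

lemma third_axis_neq: "a \<noteq> b \<Longrightarrow> third_axis a b \<noteq> a \<and> third_axis a b \<noteq> b"
  by (cases a; cases b) auto

lemma turn_rotation_in_rotations: "R \<in> rotations \<Longrightarrow> turn_rotation R j \<in> rotations"
  by (cases R; cases j) (auto simp: rotations_def dest: third_axis_neq)

lemma rotate_layer_turn:
  assumes "R \<in> rotations"
  shows "rotate R (layer_turn j pc) = rotate (turn_rotation R j) pc"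
proof -
  obtain a sa b sb where R: "R = (a, sa, b, sb)"
    by (cases R)
  obtain x y z m where pc: "pc = ((x, y, z), m)"
    by (metis prod.collapse)
  show ?thesis
    using assms unfolding R pc
    by (cases a; cases b; cases j; cases m)
      (simp_all add: rotations_def layer_turn_def place_def signed_def rotation_sign_def)
qed

definition rotation_id :: rotation where
  "rotation_id = (AX, True, AY, True)"

lemma rotation_id_in_rotations: "rotation_id \<in> rotations"
  by (simp add: rotation_id_def rotations_def)

lemma rotate_rotation_id: "rotate rotation_id pc = pc"
  by (cases pc) (auto simp: rotation_id_def place_def signed_def rotation_sign_def split: axis.splits)

lemma rotate_inj:
  assumes "R \<in> rotations" "rotate R pc = rotate R pc'"
  shows "pc = pc'"
proof -
  obtain a sa b sb where R: "R = (a, sa, b, sb)"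
    by (cases R)
  obtain x y z m x' y' z' m' where pc: "pc = ((x, y, z), m)" "pc' = ((x', y', z'), m')"
    by (metis prod.collapse)
  show ?thesis
    using assms unfolding R pc
    by (cases a; cases b) (auto simp: rotations_def place_def signed_def split: axis.splits if_splits)
qed

lemma card_rotations: "card rotations = 24"
proof -
  let ?pairs = "{(AX, AY), (AX, AZ), (AY, AX), (AY, AZ), (AZ, AX), (AZ, AY)}"
  let ?f = "\<lambda>((a, b), sa, sb). (a, sa, b, sb) :: rotation"
  have rotations_eq: "rotations = ?f ` (?pairs \<times> UNIV)"
  proof
    show "rotations \<subseteq> ?f ` (?pairs \<times> UNIV)"
    proof
      fix R assume "R \<in> rotations"
      then obtain a sa b sb where R: "R = (a, sa, b, sb)" "a \<noteq> b"
        by (auto simp: rotations_def)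
      then have "(a, b) \<in> ?pairs"
        by (cases a; cases b) auto
      then show "R \<in> ?f ` (?pairs \<times> UNIV)"
        unfolding R by (intro image_eqI[where x = "((a, b), sa, sb)"]) auto
    qed
    show "?f ` (?pairs \<times> UNIV) \<subseteq> rotations"
      by (auto simp: rotations_def)
  qed
  have "inj_on ?f (?pairs \<times> UNIV)"
    by (auto simp: inj_on_def)
  then have "card rotations = card (?pairs \<times> (UNIV :: (bool \<times> bool) set))"
    unfolding rotations_eq by (rule card_image)
  moreover have "card (UNIV :: (bool \<times> bool) set) = 4"
    using card_cartesian_product[of "UNIV :: bool set" "UNIV :: bool set"] by simp
  ultimately show ?thesis
    by (simp add: card_cartesian_product)
qed

lemma finite_rotations: "finite rotations"
  using card_rotations by (metis card.infinite zero_neq_numeral)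

inductive_set turn_orbit :: "'l cell \<Rightarrow> 'l cell set" for c where
  turn_orbit_self: "c \<in> turn_orbit c"
| turn_orbit_turn: "d \<in> turn_orbit c \<Longrightarrow> cell_turn j d \<in> turn_orbit c"

lemma turn_orbit_trans: "e \<in> turn_orbit d \<Longrightarrow> d \<in> turn_orbit c \<Longrightarrow> e \<in> turn_orbit c"
  by (induction rule: turn_orbit.induct) (auto intro: turn_orbit_turn)

lemma quarter_turn_pow_in_turn_orbit: "(quarter_turn j a ^^ n) c \<in> turn_orbit c"
proof (induction n)
  case (Suc n)
  then show ?case
    by (auto simp: quarter_turn_eq intro: turn_orbit_turn)
qed (simp add: turn_orbit_self)

lemma basic_twist_in_turn_orbit: "s \<in> basic_twists \<Longrightarrow> s c \<in> turn_orbit c"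
  by (metis basic_twistsE quarter_turn_pow_in_turn_orbit)

lemma turn_orbit_rotation:
  "d \<in> turn_orbit c \<Longrightarrow> \<exists>R\<in>rotations. rotate R (Rep_cell d) = Rep_cell c"
proof (induction rule: turn_orbit.induct)
  case turn_orbit_self
  show ?case
    using rotation_id_in_rotations rotate_rotation_id by blast
next
  case (turn_orbit_turn d j)
  then obtain R where R: "R \<in> rotations" "rotate R (Rep_cell d) = Rep_cell c"
    by blast
  let ?R3 = "turn_rotation (turn_rotation (turn_rotation R j) j) j"
  have "rotate ?R3 (Rep_cell (cell_turn j d))
      = rotate R (layer_turn j (layer_turn j (layer_turn j (layer_turn j (Rep_cell d)))))"
    using R(1) by (simp add: Rep_cell_turn rotate_layer_turn turn_rotation_in_rotations)
  then show ?case
    using R turn_rotation_in_rotations by (metis layer_turn_4)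
qed

lemma finite_turn_orbit: "finite (turn_orbit c)"
  and card_turn_orbit: "card (turn_orbit c) \<le> 24"
proof -
  define R where "R d = (SOME R. R \<in> rotations \<and> rotate R (Rep_cell d) = Rep_cell c)" for d
  have R: "R d \<in> rotations \<and> rotate (R d) (Rep_cell d) = Rep_cell c" if "d \<in> turn_orbit c" for d
  proof -
    have "\<exists>R. R \<in> rotations \<and> rotate R (Rep_cell d) = Rep_cell c"
      using turn_orbit_rotation[OF that] by blast
    then show ?thesis
      unfolding R_def by (rule someI_ex)
  qed
  have inj: "inj_on R (turn_orbit c)"
    by (rule inj_onI) (metis R Rep_cell_inject rotate_inj)
  moreover have sub: "R ` turn_orbit c \<subseteq> rotations"
    using R by blast
  ultimately show "finite (turn_orbit c)"
    using finite_rotations finite_imageD finite_subset by metis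
  have "card (turn_orbit c) \<le> card rotations"
    using card_inj_on_le[OF inj sub finite_rotations] .
  then show "card (turn_orbit c) \<le> 24"
    by (simp add: card_rotations)
qed

definition rigid :: "('l cell \<Rightarrow> 'l cell) \<Rightarrow> bool" where
  "rigid \<rho> \<longleftrightarrow> (\<forall>c. \<exists>R\<in>rotations. \<forall>d. point_of d = point_of c \<longrightarrow> Rep_cell (\<rho> d) = rotate R (Rep_cell d))"

text \<open>The permutations recorded by the legal stages of runs over the identity labelling.\<close>
definition cube_motion :: "('l cell \<Rightarrow> 'l cell) \<Rightarrow> bool" where
  "cube_motion \<rho> \<longleftrightarrow> inj \<rho> \<and> rigid \<rho> \<and> (\<forall>c. \<rho> c \<in> turn_orbit c)"

lemma cube_motion_id: "cube_motion id"
  unfolding cube_motion_def rigid_def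
  by (auto simp: turn_orbit_self rotate_rotation_id intro!: bexI[OF _ rotation_id_in_rotations])

lemma point_of_cell_turn_eq:
  "point_of d = point_of c \<Longrightarrow> point_of (cell_turn j d) = point_of (cell_turn j c)"
  by (metis Rep_cell_turn fst_layer_turn prod.collapse)

lemma rigid_comp_quarter_turn:
  assumes "rigid \<rho>"
  shows "rigid (\<rho> \<circ> quarter_turn j a)"
  unfolding rigid_def
proof
  fix c
  show "\<exists>R\<in>rotations. \<forall>d. point_of d = point_of c \<longrightarrow>
      Rep_cell ((\<rho> \<circ> quarter_turn j a) d) = rotate R (Rep_cell d)"
  proof (cases "coord_of j (point_of c) = a")
    case True
    obtain R where R: "R \<in> rotations"
      "\<forall>e. point_of e = point_of (cell_turn j c) \<longrightarrow> Rep_cell (\<rho> e) = rotate R (Rep_cell e)"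
      using assms unfolding rigid_def by blast
    have "Rep_cell (\<rho> (quarter_turn j a d)) = rotate (turn_rotation R j) (Rep_cell d)"
      if "point_of d = point_of c" for d
      using that True R point_of_cell_turn_eq[OF that, of j]
      by (simp add: quarter_turn_eq Rep_cell_turn rotate_layer_turn)
    then show ?thesis
      using turn_rotation_in_rotations[OF R(1)] by auto
  next
    case False
    then have "quarter_turn j a d = d" if "point_of d = point_of c" for d
      using that by (simp add: quarter_turn_eq)
    then show ?thesis
      using assms unfolding rigid_def by auto
  qed
qed

lemma cube_motion_comp_quarter_turn:
  assumes "cube_motion \<rho>"
  shows "cube_motion (\<rho> \<circ> quarter_turn j a)"
proof -
  have "\<rho> (quarter_turn j a c) \<in> turn_orbit c" for c
    using assms turn_orbit_trans quarter_turn_pow_in_turn_orbit[of 1 j a]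
    unfolding cube_motion_def by fastforce
  then show ?thesis
    using assms rigid_comp_quarter_turn bij_is_inj[OF bij_quarter_turn] inj_compose
    unfolding cube_motion_def by fastforce
qed

lemma cube_motion_comp_quarter_turn_pow:
  "cube_motion \<rho> \<Longrightarrow> cube_motion (\<rho> \<circ> quarter_turn j a ^^ n)"
proof (induction n)
  case (Suc n)
  then show ?case
    using cube_motion_comp_quarter_turn[OF Suc.IH[OF Suc.prems]]
    by (simp only: funpow_Suc_right comp_assoc)
qed simp

lemma cube_motion_comp_inv_basic_twist:
  "s \<in> basic_twists \<Longrightarrow> cube_motion \<rho> \<Longrightarrow> cube_motion (\<rho> \<circ> inv s)"
  by (metis inv_basic_twist cube_motion_comp_quarter_turn_pow)

lemma finite_cells_at_point: "finite {d :: 'l cell. point_of d = p}"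
proof -
  have "{d :: 'l cell. point_of d = p} \<subseteq> (\<lambda>i. Abs_cell (p, i)) ` UNIV"
    by (auto simp: image_iff) (metis Rep_cell_inverse prod.collapse)
  then show ?thesis
    by (rule finite_subset) (simp add: axis_UNIV)
qed

subsection \<open>A ring of edge cells cannot be coloured invariantly\<close>

fun next_axis :: "axis \<Rightarrow> axis" where
  "next_axis AX = AY" | "next_axis AY = AZ" | "next_axis AZ = AX"

definition layer_point :: "axis \<Rightarrow> 'l coord \<Rightarrow> 'l coord \<Rightarrow> 'l point" where
  "layer_point j a s = ((if j = AX then a else s), (if j = AY then a else s), (if j = AZ then a else s))"

lemma next_axis_neq: "next_axis j \<noteq> j" "next_axis (next_axis j) \<noteq> j"
  by (cases j; simp)+

lemma coord_of_layer_point: "i \<noteq> j \<Longrightarrow> coord_of i (layer_point j a s) = s"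
  by (cases i; cases j; simp add: layer_point_def)

lemma Rep_cell_Abs_layer_point:
  "i \<noteq> j \<Longrightarrow> s \<in> {PInf, MInf} \<Longrightarrow> Rep_cell (Abs_cell (layer_point j a s, i)) = (layer_point j a s, i)"
  by (rule Rep_cell_Abs_cell) (simp add: is_cell_def coord_of_layer_point)

text \<open>Rotations preserve orientation, so the cell of an edge (or corner) cubie is determined by the
  colours of two of its cells.\<close>
lemma rotate_eq_of_solved_colours:
  assumes "R1 \<in> rotations" "R2 \<in> rotations"
    and "solved_raw (rotate R1 (layer_point j a PInf, next_axis j))
       = solved_raw (rotate R2 (layer_point j a MInf, next_axis j))"
    and "solved_raw (rotate R1 (layer_point j a PInf, next_axis (next_axis j)))
       = solved_raw (rotate R2 (layer_point j a MInf, next_axis (next_axis j)))"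
  shows "rotate R1 (layer_point j a PInf, next_axis j) = rotate R2 (layer_point j a MInf, next_axis j)"
proof -
  obtain a1 sa1 b1 sb1 a2 sa2 b2 sb2 where R: "R1 = (a1, sa1, b1, sb1)" "R2 = (a2, sa2, b2, sb2)"
    by (cases R1; cases R2)
  show ?thesis
    using assms unfolding R
    by (cases j; cases a1; cases b1; cases a2; cases b2; simp add: rotations_def)
      (auto simp: layer_point_def place_def signed_def rotation_sign_def solved_raw_def split: if_splits)
qed

lemma quarter_turn_pow_2_layer_point:
  assumes "i \<noteq> j"
  shows "(quarter_turn j (a :: 'l coord) ^^ 2) (Abs_cell (layer_point j a PInf, i))
    = Abs_cell (layer_point j a MInf, i)"
proof -
  let ?c = "Abs_cell (layer_point j a PInf, i) :: 'l cell"
  have c: "Rep_cell ?c = (layer_point j a PInf, i)"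
    using assms by (simp add: Rep_cell_Abs_layer_point)
  have "Rep_cell (cell_turn j (cell_turn j ?c)) = (layer_point j a MInf, i)"
    using assms c by (cases j; cases i; simp add: Rep_cell_turn layer_point_def layer_turn_def)
  then have "cell_turn j (cell_turn j ?c) = Abs_cell (layer_point j a MInf, i)"
    by (metis Rep_cell_inverse)
  moreover have "coord_of j (point_of ?c) = a"
    using c by (cases j) (simp_all add: layer_point_def)
  ultimately show ?thesis
    by (simp only: quarter_turn_pow) (simp add: numeral_2_eq_2)
qed

text \<open>The eight cells of the four cubies in layer \<open>a\<close> of axis \<open>j\<close> whose other two coordinates
  are \<open>\<plusminus>\<infinity>\<close>.\<close>
definition ring_cells :: "axis \<Rightarrow> 'l coord \<Rightarrow> 'l cell set" where
  "ring_cells j a = (\<lambda>(m, i). (quarter_turn j a ^^ m) (Abs_cell (layer_point j a PInf, i)))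
     ` ({..<4} \<times> {next_axis j, next_axis (next_axis j)})"

lemma finite_ring_cells: "finite (ring_cells j a)"
  unfolding ring_cells_def by simp

lemma layer_point_in_ring_cells:
  "i \<in> {next_axis j, next_axis (next_axis j)} \<Longrightarrow> Abs_cell (layer_point j a PInf, i) \<in> ring_cells j a"
  unfolding ring_cells_def by (rule image_eqI[of _ _ "(0, i)"]) auto

lemma quarter_turn_pow_ring_cells:
  assumes "d \<in> ring_cells j a"
  shows "(quarter_turn j a ^^ k) d \<in> ring_cells j a"
proof -
  obtain m i where d: "i \<in> {next_axis j, next_axis (next_axis j)}"
    "d = (quarter_turn j a ^^ m) (Abs_cell (layer_point j a PInf, i))"
    using assms unfolding ring_cells_def by auto
  then have "(quarter_turn j a ^^ k) d = (quarter_turn j a ^^ ((k + m) mod 4)) (Abs_cell (layer_point j a PInf, i))"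
    by (simp add: quarter_turn_pow_mod_4 funpow_add)
  then show ?thesis
    unfolding ring_cells_def using d(1) by (auto intro: image_eqI[of _ _ "((k + m) mod 4, i)"])
qed

lemma ring_invariant_half_turn:
  assumes n: "n \<in> {1, 2, 3}"
    and inv: "\<forall>d\<in>ring_cells j a. F (inv (quarter_turn j a ^^ n) d) = F d"
  shows "\<forall>d\<in>ring_cells j a. F ((quarter_turn j a ^^ 2) d) = F d"
proof
  let ?T = "quarter_turn j a"
  have step: "F ((?T ^^ (4 - n)) d) = F d" if "d \<in> ring_cells j a" for d
    using that n inv inv_quarter_turn_pow[of n j a] by auto
  have iter: "F (((?T ^^ (4 - n)) ^^ k) d) = F d" if "d \<in> ring_cells j a" for k d
  proof (induction k)
    case (Suc k)
    have "((?T ^^ (4 - n)) ^^ k) d \<in> ring_cells j a"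
      using quarter_turn_pow_ring_cells[OF that] by (simp add: funpow_mult)
    with Suc show ?case
      using step by simp
  qed simp
  define k where "k = (if n = 2 then 1 else 2 :: nat)"
  have "((4 - n) * k) mod 4 = 2"
    using n unfolding k_def by auto
  then show "F ((?T ^^ 2) d) = F d" if "d \<in> ring_cells j a" for d
    using iter[OF that, of k] quarter_turn_pow_mod_4[of "(4 - n) * k" j a] by (simp add: funpow_mult)
qed

text \<open>The half turn exchanges the cubies at \<open>(+\<infinity>, +\<infinity>)\<close> and \<open>(-\<infinity>, -\<infinity>)\<close> of the layer; if it
  preserved the colours under \<open>\<rho>\<close>, then \<open>\<rho>\<close> would move both cubies to the same place.\<close>
lemma cube_motion_ring_colours:
  assumes "cube_motion \<rho>" and "n \<in> {1, 2, 3}"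
  shows "\<not> (\<forall>d\<in>ring_cells j a. f_solved (\<rho> (inv (quarter_turn j a ^^ n) d)) = f_solved (\<rho> d))"
proof
  let ?F = "\<lambda>d. f_solved (\<rho> d)"
  assume "\<forall>d\<in>ring_cells j a. ?F (inv (quarter_turn j a ^^ n) d) = ?F d"
  then have half: "\<forall>d\<in>ring_cells j a. ?F ((quarter_turn j a ^^ 2) d) = ?F d"
    by (rule ring_invariant_half_turn[OF assms(2)])
  define A B where "A = layer_point j a PInf" and "B = layer_point j a MInf"
  let ?i = "next_axis j" and ?i' = "next_axis (next_axis j)"
  have Rep_AB: "Rep_cell (Abs_cell (A, i)) = (A, i)" "Rep_cell (Abs_cell (B, i)) = (B, i)"
    if "i \<in> {?i, ?i'}" for i
  proof -
    have "i \<noteq> j"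
      using that by (cases j) auto
    then show "Rep_cell (Abs_cell (A, i)) = (A, i)" "Rep_cell (Abs_cell (B, i)) = (B, i)"
      unfolding A_def B_def by (simp_all add: Rep_cell_Abs_layer_point)
  qed
  obtain RA where RA: "RA \<in> rotations"
    "\<forall>d. point_of d = A \<longrightarrow> Rep_cell (\<rho> d) = rotate RA (Rep_cell d)"
    using assms(1) Rep_AB(1)[of ?i] unfolding cube_motion_def rigid_def by (metis fst_conv insertI1)
  obtain RB where RB: "RB \<in> rotations"
    "\<forall>d. point_of d = B \<longrightarrow> Rep_cell (\<rho> d) = rotate RB (Rep_cell d)"
    using assms(1) Rep_AB(2)[of ?i] unfolding cube_motion_def rigid_def by (metis fst_conv insertI1)
  have colours: "solved_raw (rotate RA (A, i)) = solved_raw (rotate RB (B, i))" if "i \<in> {?i, ?i'}" for i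
  proof -
    have "i \<noteq> j"
      using that by (cases j) auto
    have "?F ((quarter_turn j a ^^ 2) (Abs_cell (A, i))) = ?F (Abs_cell (A, i))"
      using half layer_point_in_ring_cells[OF that] unfolding A_def by blast
    then have "?F (Abs_cell (B, i)) = ?F (Abs_cell (A, i))"
      unfolding A_def B_def quarter_turn_pow_2_layer_point[OF \<open>i \<noteq> j\<close>] .
    then show ?thesis
      using RA(2) RB(2) Rep_AB[OF that] by (simp add: f_solved_def)
  qed
  have "rotate RA (A, ?i) = rotate RB (B, ?i)"
    using rotate_eq_of_solved_colours[OF RA(1) RB(1)] colours unfolding A_def B_def by blast
  then have "\<rho> (Abs_cell (A, ?i)) = \<rho> (Abs_cell (B, ?i))"
    using RA(2) RB(2) Rep_AB[of ?i] by (simp add: Rep_cell_inject[symmetric])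
  then have "(A, ?i) = (B, ?i)"
    using assms(1) Rep_AB[of ?i] unfolding cube_motion_def by (metis injD insertI1)
  then have "coord_of ?i A = coord_of ?i B"
    by simp
  then show False
    using next_axis_neq(1) unfolding A_def B_def by (simp add: coord_of_layer_point)
qed

subsection \<open>Limits along a well-order\<close>

lemma well_order_refl: "Well_order r \<Longrightarrow> a \<in> Field r \<Longrightarrow> (a, a) \<in> r"
  by (metis wo_rel.REFL wo_rel_def refl_onD)

lemma well_order_trans: "Well_order r \<Longrightarrow> (a, b) \<in> r \<Longrightarrow> (b, c) \<in> r \<Longrightarrow> (a, c) \<in> r"
  by (metis wo_rel.TRANS wo_rel_def transD)

lemma well_order_antisym: "Well_order r \<Longrightarrow> (a, b) \<in> r \<Longrightarrow> (b, a) \<in> r \<Longrightarrow> a = b"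
  by (metis wo_rel.ANTISYM wo_rel_def antisymD)

lemma well_order_total:
  "Well_order r \<Longrightarrow> a \<in> Field r \<Longrightarrow> b \<in> Field r \<Longrightarrow> (a, b) \<in> r \<or> (b, a) \<in> r"
  by (metis wo_rel.TOTALS wo_rel_def)

lemma well_order_induct:
  assumes "Well_order r" and "\<And>x. (\<And>y. y \<in> underS r x \<Longrightarrow> P y) \<Longrightarrow> P x"
  shows "P a"
proof (rule wf_induct[OF wo_rel.WF[unfolded wo_rel_def, OF assms(1)]])
  fix x
  assume IH: "\<forall>y. (y, x) \<in> r - Id \<longrightarrow> P y"
  show "P x"
  proof (rule assms(2))
    show "P y" if "y \<in> underS r x" for y
      using IH that by (simp add: underS_def)
  qed
qed

lemma underS_trans:
  assumes "Well_order r" "z \<in> underS r a" "(y, z) \<in> r"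
  shows "y \<in> underS r a"
proof -
  have "(z, a) \<in> r" "z \<noteq> a"
    using assms(2) by (auto simp: underS_def)
  moreover have "(y, a) \<in> r"
    using well_order_trans[OF assms(1) assms(3)] \<open>(z, a) \<in> r\<close> .
  moreover have "y \<noteq> a"
    using well_order_antisym[OF assms(1) assms(3)] \<open>(z, a) \<in> r\<close> \<open>z \<noteq> a\<close> by blast
  ultimately show ?thesis
    by (simp add: underS_def)
qed

definition tail_filter :: "'i rel \<Rightarrow> 'i set \<Rightarrow> 'i filter" where
  "tail_filter r S = (INF z0\<in>S. principal {z\<in>S. (z0, z) \<in> r})"

lemma eventually_tail_filter:
  assumes "Well_order r" "S \<subseteq> Field r" "S \<noteq> {}"
  shows "eventually P (tail_filter r S) \<longleftrightarrow> (\<exists>z0\<in>S. \<forall>z\<in>S. (z0, z) \<in> r \<longrightarrow> P z)"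
proof -
  let ?tail = "\<lambda>a. principal {z\<in>S. (a, z) \<in> r}"
  have tail_le: "?tail b \<le> inf (?tail a) (?tail b)" if "(a, b) \<in> r" for a b
    using well_order_trans[OF assms(1) that] by auto
  have directed: "\<exists>x\<in>S. ?tail x \<le> inf (?tail a) (?tail b)" if "a \<in> S" "b \<in> S" for a b
  proof (cases "(a, b) \<in> r")
    case True
    then show ?thesis
      using tail_le that(2) by blast
  next
    case False
    then have "(b, a) \<in> r"
      using well_order_total[OF assms(1)] that assms(2) by blast
    then show ?thesis
      using tail_le[of b a] that(1) by (auto simp: inf_commute)
  qed
  have "eventually P (tail_filter r S) \<longleftrightarrow> (\<exists>b\<in>S. eventually P (?tail b))"
    unfolding tail_filter_def by (rule eventually_INF_base[OF assms(3) directed])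
  then show ?thesis
    by (auto simp: eventually_principal)
qed

lemma tail_filter_neq_bot:
  assumes "Well_order r" "S \<subseteq> Field r" "S \<noteq> {}"
  shows "tail_filter r S \<noteq> bot"
proof
  assume "tail_filter r S = bot"
  then obtain z0 where "z0 \<in> S" "\<forall>z\<in>S. (z0, z) \<notin> r"
    using eventually_tail_filter[OF assms, of "\<lambda>_. False"] by auto
  then show False
    using well_order_refl[OF assms(1)] assms(2) by blast
qed

lemma eventually_tail_filter_ge:
  assumes "Well_order r" "S \<subseteq> Field r" "z0 \<in> S"
  shows "eventually (\<lambda>z. z \<in> S \<and> (z0, z) \<in> r) (tail_filter r S)"
  using assms by (subst eventually_tail_filter) auto

lemma ev_lim_empty [simp]: "ev_lim r {} G d = d"
  by (simp add: ev_lim_def)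

lemma ev_lim_eventually:
  assumes "Well_order r" "S \<subseteq> Field r" "S \<noteq> {}"
  shows "ev_lim r S G d c = (if \<exists>v. eventually (\<lambda>z. G z c = v) (tail_filter r S)
    then THE v. eventually (\<lambda>z. G z c = v) (tail_filter r S) else None)"
  using assms(3) unfolding ev_lim_def eventually_tail_filter[OF assms] by simp

lemma ev_lim_eqI:
  assumes "Well_order r" "S \<subseteq> Field r" "S \<noteq> {}"
    and "eventually (\<lambda>z. G z c = v) (tail_filter r S)"
  shows "ev_lim r S G d c = v"
proof -
  have "w = v" if "eventually (\<lambda>z. G z c = w) (tail_filter r S)" for w
    using eventually_happens'[OF tail_filter_neq_bot[OF assms(1-3)] eventually_conj[OF that assms(4)]]
    by auto
  then have "(THE w. eventually (\<lambda>z. G z c = w) (tail_filter r S)) = v"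
    using assms(4) by (rule the_equality[rotated])
  then show ?thesis
    unfolding ev_lim_eventually[OF assms(1-3)] using assms(4) by auto
qed

lemma eventually_ev_lim:
  assumes "Well_order r" "S \<subseteq> Field r" "S \<noteq> {}" "ev_lim r S G d c \<noteq> None"
  shows "eventually (\<lambda>z. G z c = ev_lim r S G d c) (tail_filter r S)"
proof -
  obtain v where v: "eventually (\<lambda>z. G z c = v) (tail_filter r S)"
    using assms(4) unfolding ev_lim_eventually[OF assms(1-3)] by (auto split: if_splits)
  then have "ev_lim r S G d c = v"
    by (rule ev_lim_eqI[OF assms(1-3)])
  then show ?thesis
    using v by simp
qed

lemma ev_lim_cong:
  assumes "\<And>z. z \<in> S \<Longrightarrow> G z = G' z"
  shows "ev_lim r S G d = ev_lim r S G' d"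
proof -
  have "(\<exists>z0\<in>S. \<forall>z\<in>S. (z0, z) \<in> r \<longrightarrow> G z c = v) \<longleftrightarrow> (\<exists>z0\<in>S. \<forall>z\<in>S. (z0, z) \<in> r \<longrightarrow> G' z c = v)"
    for c v
    using assms by auto
  then show ?thesis
    unfolding ev_lim_def by (simp only:)
qed

lemma ev_lim_greatest:
  assumes "Well_order r" "S \<subseteq> Field r" "m \<in> S" "\<forall>z\<in>S. (z, m) \<in> r"
  shows "ev_lim r S G d = G m"
proof
  fix c
  have "eventually (\<lambda>z. z = m) (tail_filter r S)"
    using eventually_tail_filter_ge[OF assms(1-3)]
  proof (rule eventually_mono)
    show "z = m" if "z \<in> S \<and> (m, z) \<in> r" for z
      using that assms(4) well_order_antisym[OF assms(1)] by blast
  qed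
  then have "eventually (\<lambda>z. G z c = G m c) (tail_filter r S)"
    by (rule eventually_mono) simp
  then show "ev_lim r S G d c = G m c"
    using assms(3) by (intro ev_lim_eqI[OF assms(1,2)]) auto
qed

definition run :: "'i rel \<Rightarrow> ('i \<Rightarrow> 'l cell \<Rightarrow> 'l cell) \<Rightarrow> ('l, 'x) labelling
    \<Rightarrow> 'i \<Rightarrow> ('l, 'x) labelling" where
  "run r \<sigma> f0 = wfrec (r - Id) (\<lambda>F \<eta>. ev_lim r (underS r \<eta>) (\<lambda>\<zeta>. act (\<sigma> \<zeta>) (F \<zeta>)) f0)"

abbreviation run_succ :: "'i rel \<Rightarrow> ('i \<Rightarrow> 'l cell \<Rightarrow> 'l cell) \<Rightarrow> ('l, 'x) labelling
    \<Rightarrow> 'i \<Rightarrow> ('l, 'x) labelling" where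
  "run_succ r \<sigma> f0 \<zeta> \<equiv> act (\<sigma> \<zeta>) (run r \<sigma> f0 \<zeta>)"

lemma run_eq:
  assumes "Well_order r"
  shows "run r \<sigma> f0 \<eta> = ev_lim r (underS r \<eta>) (run_succ r \<sigma> f0) f0"
  unfolding run_def
  by (subst wfrec[OF wo_rel.WF[unfolded wo_rel_def, OF assms]])
    (rule ev_lim_cong, simp add: underS_def cut_apply)

lemma is_run_run: "Well_order r \<Longrightarrow> is_run r \<sigma> f0 (run r \<sigma> f0)"
  unfolding is_run_def by (intro ballI run_eq)

lemma is_run_unique:
  assumes "Well_order r" "is_run r \<sigma> f0 F"
  shows "\<eta> \<in> Field r \<Longrightarrow> F \<eta> = run r \<sigma> f0 \<eta>"
proof (induction \<eta> rule: well_order_induct[OF assms(1)])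
  case (1 \<eta>)
  have "F \<eta> = ev_lim r (underS r \<eta>) (\<lambda>\<zeta>. act (\<sigma> \<zeta>) (F \<zeta>)) f0"
    using assms(2) 1(2) unfolding is_run_def by blast
  also have "\<dots> = run r \<sigma> f0 \<eta>"
    unfolding run_eq[OF assms(1), of \<sigma> f0 \<eta>]
  proof (rule ev_lim_cong)
    fix \<zeta> assume "\<zeta> \<in> underS r \<eta>"
    moreover from this have "\<zeta> \<in> Field r"
      by (auto simp: underS_def Field_def)
    ultimately show "act (\<sigma> \<zeta>) (F \<zeta>) = run_succ r \<sigma> f0 \<zeta>"
      using 1(1) by simp
  qed
  finally show ?case .
qed

lemma terminal_is_run:
  assumes "Well_order r" "is_run r \<sigma> f0 F"
  shows "terminal r \<sigma> f0 = ev_lim r (Field r) (\<lambda>\<zeta>. act (\<sigma> \<zeta>) (F \<zeta>)) f0"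
proof -
  have eq: "ev_lim r (Field r) (\<lambda>\<zeta>. act (\<sigma> \<zeta>) (F' \<zeta>)) f0 = ev_lim r (Field r) (run_succ r \<sigma> f0) f0"
    if "is_run r \<sigma> f0 F'" for F'
    using is_run_unique[OF assms(1) that] by (simp cong: ev_lim_cong)
  show ?thesis
    unfolding terminal_def
  proof (rule the_equality)
    show "\<exists>F'. is_run r \<sigma> f0 F' \<and> ev_lim r (Field r) (\<lambda>\<zeta>. act (\<sigma> \<zeta>) (F \<zeta>)) f0
        = ev_lim r (Field r) (\<lambda>\<zeta>. act (\<sigma> \<zeta>) (F' \<zeta>)) f0"
      using assms(2) by blast
  next
    fix T assume "\<exists>F'. is_run r \<sigma> f0 F' \<and> T = ev_lim r (Field r) (\<lambda>\<zeta>. act (\<sigma> \<zeta>) (F' \<zeta>)) f0"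
    then show "T = ev_lim r (Field r) (\<lambda>\<zeta>. act (\<sigma> \<zeta>) (F \<zeta>)) f0"
      using eq assms(2) by metis
  qed
qed

lemma terminal_eq: "Well_order r \<Longrightarrow> terminal r \<sigma> f0 = ev_lim r (Field r) (run_succ r \<sigma> f0) f0"
  by (rule terminal_is_run[OF _ is_run_run])

lemma eventually_tail_filter_witness:
  assumes "Well_order r" "S \<subseteq> Field r" "S \<noteq> {}" "eventually P (tail_filter r S)"
  shows "\<exists>z\<in>S. P z"
proof -
  obtain z0 where z0: "z0 \<in> S"
    using assms(3) by blast
  have "eventually (\<lambda>z. (z \<in> S \<and> (z0, z) \<in> r) \<and> P z) (tail_filter r S)"
    using eventually_conj[OF eventually_tail_filter_ge[OF assms(1,2) z0] assms(4)] .
  then show ?thesis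
    using eventually_happens'[OF tail_filter_neq_bot[OF assms(1-3)]] by blast
qed

lemma eventually_tail_filter_underS:
  assumes wo: "Well_order r" and S: "S \<subseteq> Field r" "S \<noteq> {}" "\<forall>z\<in>S. underS r z \<subseteq> S"
    and no_greatest: "\<forall>m\<in>S. \<exists>z\<in>S. (z, m) \<notin> r"
    and P: "eventually P (tail_filter r S)"
  shows "eventually (\<lambda>\<xi>. underS r \<xi> \<noteq> {} \<and> eventually P (tail_filter r (underS r \<xi>))) (tail_filter r S)"
proof -
  obtain z0 where z0: "z0 \<in> S" "\<forall>z\<in>S. (z0, z) \<in> r \<longrightarrow> P z"
    using P unfolding eventually_tail_filter[OF wo S(1,2)] by blast
  obtain z1 where z1: "z1 \<in> S" "(z1, z0) \<notin> r"
    using no_greatest z0(1) by blast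
  then have "(z0, z1) \<in> r"
    using well_order_total[OF wo] S(1) z0(1) well_order_refl[OF wo] by blast
  have "underS r \<xi> \<noteq> {} \<and> eventually P (tail_filter r (underS r \<xi>))"
    if \<xi>: "\<xi> \<in> S" "(z1, \<xi>) \<in> r" for \<xi>
  proof -
    have "(z0, \<xi>) \<in> r"
      using well_order_trans[OF wo \<open>(z0, z1) \<in> r\<close> \<xi>(2)] .
    moreover have "\<xi> \<noteq> z0"
      using \<xi>(2) z1(2) by blast
    ultimately have z0_below: "z0 \<in> underS r \<xi>"
      by (simp add: underS_def)
    have "\<forall>z\<in>underS r \<xi>. (z0, z) \<in> r \<longrightarrow> P z"
      using z0(2) S(3) \<xi>(1) by blast
    then show ?thesis
      using z0_below by (subst eventually_tail_filter[OF wo Order_Relation.underS_Field]) auto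
  qed
  then show ?thesis
    unfolding eventually_tail_filter[OF wo S(1,2)] using z1(1) by blast
qed

lemma ev_lim_None_on_finite:
  assumes wo: "Well_order r" and S: "S \<subseteq> Field r" "\<zeta> \<in> S" and "finite D"
    and None: "\<forall>\<xi>\<in>S. (\<zeta>, \<xi>) \<in> r \<longrightarrow> (\<exists>d\<in>D. G \<xi> d = None)"
  shows "\<exists>d\<in>D. ev_lim r S G g d = None"
proof (rule ccontr)
  assume contra: "\<not> ?thesis"
  then have "\<forall>d\<in>D. eventually (\<lambda>z. G z d = ev_lim r S G g d) (tail_filter r S)"
    using eventually_ev_lim[OF wo S(1)] S(2) by blast
  then have "eventually (\<lambda>z. \<forall>d\<in>D. G z d = ev_lim r S G g d) (tail_filter r S)"
    by (rule eventually_ball_finite[OF \<open>finite D\<close>])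
  with eventually_tail_filter_ge[OF wo S]
  have "eventually (\<lambda>z. (z \<in> S \<and> (\<zeta>, z) \<in> r) \<and> (\<forall>d\<in>D. G z d = ev_lim r S G g d)) (tail_filter r S)"
    by (rule eventually_conj)
  then obtain \<xi> where "\<xi> \<in> S" "(\<zeta>, \<xi>) \<in> r" "\<forall>d\<in>D. G \<xi> d = ev_lim r S G g d"
    using eventually_tail_filter_witness[OF wo S(1)] S(2) by blast
  then show False
    using None contra by metis
qed

lemma legal_act: "legal f \<Longrightarrow> legal (act s f)"
  by (simp add: legal_def act_def)

lemma id_labelling_eq_Some: "id_labelling = Some"
  by (simp add: id_labelling_def fun_eq_iff)

lemma ev_lim_comp:
  assumes wo: "Well_order r" and S: "S \<subseteq> Field r"
    and lim: "ev_lim r S (\<lambda>\<xi>. Some \<circ> \<rho> \<xi>) Some c = Some v"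
  shows "ev_lim r S (\<lambda>\<xi>. g \<circ> \<rho> \<xi>) g c = g v"
proof (cases "S = {}")
  case ne: False
  have "eventually (\<lambda>z. Some (\<rho> z c) = Some v) (tail_filter r S)"
    using eventually_ev_lim[OF wo S ne, of "\<lambda>\<xi>. Some \<circ> \<rho> \<xi>" Some c] lim by simp
  then have "eventually (\<lambda>z. (g \<circ> \<rho> z) c = g v) (tail_filter r S)"
    by (rule eventually_mono) simp
  then show ?thesis
    by (rule ev_lim_eqI[OF wo S ne])
qed (use lim in simp)

lemma ev_lim_agrees_on_finite:
  assumes wo: "Well_order r" and S: "S \<subseteq> Field r" "S \<noteq> {}"
    and legal: "legal (ev_lim r S (\<lambda>\<xi>. Some \<circ> \<rho> \<xi>) Some)" and "finite C"
  shows "\<exists>z\<in>S. \<forall>c\<in>C. \<rho> z c = the (ev_lim r S (\<lambda>\<xi>. Some \<circ> \<rho> \<xi>) Some c)"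
proof -
  have "eventually (\<lambda>z. \<rho> z c = the (ev_lim r S (\<lambda>\<xi>. Some \<circ> \<rho> \<xi>) Some c)) (tail_filter r S)" for c
  proof -
    obtain v where v: "ev_lim r S (\<lambda>\<xi>. Some \<circ> \<rho> \<xi>) Some c = Some v"
      using legal unfolding legal_def by blast
    show ?thesis
      using eventually_ev_lim[OF wo S, of "\<lambda>\<xi>. Some \<circ> \<rho> \<xi>" Some c] v by simp
  qed
  then have "eventually (\<lambda>z. \<forall>c\<in>C. \<rho> z c = the (ev_lim r S (\<lambda>\<xi>. Some \<circ> \<rho> \<xi>) Some c)) (tail_filter r S)"
    by (intro eventually_ball_finite[OF \<open>finite C\<close>]) blast
  then show ?thesis
    by (rule eventually_tail_filter_witness[OF wo S])
qed

lemma cube_motion_ev_lim: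
  assumes wo: "Well_order r" and S: "S \<subseteq> Field r"
    and motion: "\<forall>\<xi>\<in>S. cube_motion (\<rho> \<xi>)"
    and legal: "legal (ev_lim r S (\<lambda>\<xi>. Some \<circ> \<rho> \<xi>) Some)"
  shows "cube_motion (the \<circ> ev_lim r S (\<lambda>\<xi>. Some \<circ> \<rho> \<xi>) Some)"
proof (cases "S = {}")
  case True
  then show ?thesis
    using cube_motion_id by (simp add: comp_def id_def)
next
  case ne: False
  define \<rho>' where "\<rho>' = the \<circ> ev_lim r S (\<lambda>\<xi>. Some \<circ> \<rho> \<xi>) Some"
  have agree: "\<exists>z\<in>S. cube_motion (\<rho> z) \<and> (\<forall>c\<in>C. \<rho> z c = \<rho>' c)" if "finite C" for C
    using ev_lim_agrees_on_finite[OF wo S ne legal that] motion unfolding \<rho>'_def by auto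
  have "inj \<rho>'"
  proof (rule injI)
    fix c1 c2 assume eq: "\<rho>' c1 = \<rho>' c2"
    obtain z where z: "cube_motion (\<rho> z)" "\<forall>c\<in>{c1, c2}. \<rho> z c = \<rho>' c"
      using agree[of "{c1, c2}"] by blast
    then have "\<rho> z c1 = \<rho> z c2"
      using eq by simp
    then show "c1 = c2"
      using z(1) unfolding cube_motion_def by (blast dest: injD)
  qed
  moreover have "\<rho>' c \<in> turn_orbit c" for c
  proof -
    obtain z where z: "cube_motion (\<rho> z)" "\<forall>d\<in>{c}. \<rho> z d = \<rho>' d"
      using agree[of "{c}"] by blast
    then have "\<rho> z c \<in> turn_orbit c"
      unfolding cube_motion_def by blast
    then show ?thesis
      using z(2) by simp
  qed
  moreover have "rigid \<rho>'"
    unfolding rigid_def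
  proof
    fix c
    obtain z where z: "cube_motion (\<rho> z)" "\<forall>d\<in>{d. point_of d = point_of c}. \<rho> z d = \<rho>' d"
      using agree[OF finite_cells_at_point] by blast
    then obtain R where "R \<in> rotations"
      "\<forall>d. point_of d = point_of c \<longrightarrow> Rep_cell (\<rho> z d) = rotate R (Rep_cell d)"
      unfolding cube_motion_def rigid_def by blast
    then show "\<exists>R\<in>rotations. \<forall>d. point_of d = point_of c \<longrightarrow> Rep_cell (\<rho>' d) = rotate R (Rep_cell d)"
      using z(2) by auto
  qed
  ultimately show ?thesis
    unfolding cube_motion_def \<rho>'_def by blast
qed

locale basic_sequence =
  fixes r :: "'i rel" and \<sigma> :: "'i \<Rightarrow> 'l cell \<Rightarrow> 'l cell"
  assumes basic_seq: "basic_seq r \<sigma>"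
begin

lemma wo: "Well_order r"
  using basic_seq by (simp add: basic_seq_def)

lemma twist: "\<zeta> \<in> Field r \<Longrightarrow> \<sigma> \<zeta> \<in> basic_twists"
  using basic_seq by (simp add: basic_seq_def)

lemma run_at: "run r \<sigma> g \<eta> = ev_lim r (underS r \<eta>) (run_succ r \<sigma> g) g"
  by (rule run_eq[OF wo])

lemma run_succ_twist: "\<zeta> \<in> Field r \<Longrightarrow> run_succ r \<sigma> g \<zeta> (\<sigma> \<zeta> c) = run r \<sigma> g \<zeta> c"
  by (simp add: act_def bij_is_inj[OF bij_basic_twist[OF twist]])

subsection \<open>A NaC never disappears from its orbit\<close>

lemma run_None_persists:
  assumes \<zeta>: "\<zeta> \<in> Field r" and None: "run r \<sigma> g \<zeta> c = None"
  shows "\<zeta>' \<in> Field r \<Longrightarrow> (\<zeta>, \<zeta>') \<in> r \<Longrightarrow> \<exists>d\<in>turn_orbit c. run_succ r \<sigma> g \<zeta>' d = None"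
proof (induction \<zeta>' rule: well_order_induct[OF wo])
  case (1 \<zeta>')
  obtain d where d: "d \<in> turn_orbit c" "run r \<sigma> g \<zeta>' d = None"
  proof (cases "\<zeta>' = \<zeta>")
    case True
    then show thesis
      using that turn_orbit_self None by blast
  next
    case False
    then have "\<zeta> \<in> underS r \<zeta>'"
      using 1(3) by (simp add: underS_def)
    moreover have "\<exists>d\<in>turn_orbit c. run_succ r \<sigma> g \<xi> d = None"
      if "\<xi> \<in> underS r \<zeta>'" "(\<zeta>, \<xi>) \<in> r" for \<xi>
      using 1(1)[OF that(1) underS_Field[OF that(1)] that(2)] .
    ultimately have "\<exists>d\<in>turn_orbit c. ev_lim r (underS r \<zeta>') (run_succ r \<sigma> g) g d = None"
      by (intro ev_lim_None_on_finite[OF wo Order_Relation.underS_Field _ finite_turn_orbit]) auto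
    then show thesis
      using that unfolding run_at[of g \<zeta>'] by blast
  qed
  have "\<sigma> \<zeta>' d \<in> turn_orbit c"
    using turn_orbit_trans[OF basic_twist_in_turn_orbit[OF twist[OF 1(2)]] d(1)] .
  moreover have "run_succ r \<sigma> g \<zeta>' (\<sigma> \<zeta>' d) = None"
    using trans[OF run_succ_twist[OF 1(2)] d(2)] .
  ultimately show ?case
    by blast
qed

lemma legal_run_if_legal_terminal:
  assumes legal: "legal (terminal r \<sigma> g)" and \<zeta>: "\<zeta> \<in> Field r"
  shows "legal (run r \<sigma> g \<zeta>)"
proof (rule ccontr)
  assume "\<not> legal (run r \<sigma> g \<zeta>)"
  then obtain c where "run r \<sigma> g \<zeta> c = None"
    by (auto simp: legal_def)
  then have "\<exists>d\<in>turn_orbit c. ev_lim r (Field r) (run_succ r \<sigma> g) g d = None"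
    using run_None_persists[OF \<zeta>]
    by (intro ev_lim_None_on_finite[OF wo subset_refl \<zeta> finite_turn_orbit]) blast
  then obtain d where "terminal r \<sigma> g d = None"
    unfolding terminal_eq[OF wo] by blast
  then show False
    using legal unfolding legal_def by blast
qed

lemma ev_lim_run_succ_motion:
  assumes S: "S \<subseteq> Field r"
    and legal: "\<forall>\<xi>\<in>S. legal (run r \<sigma> Some \<xi>)"
    and motion: "\<forall>\<xi>\<in>S. cube_motion (the \<circ> run r \<sigma> Some \<xi>)"
    and relabel: "\<forall>\<xi>\<in>S. run r \<sigma> g \<xi> = g \<circ> (the \<circ> run r \<sigma> Some \<xi>)"
    and lim: "legal (ev_lim r S (run_succ r \<sigma> Some) Some)"
  shows "cube_motion (the \<circ> ev_lim r S (run_succ r \<sigma> Some) Some)"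
    and "ev_lim r S (run_succ r \<sigma> g) g = g \<circ> (the \<circ> ev_lim r S (run_succ r \<sigma> Some) Some)"
proof -
  define \<rho> where "\<rho> \<xi> = (the \<circ> run r \<sigma> Some \<xi>) \<circ> inv (\<sigma> \<xi>)" for \<xi>
  have Some_eq: "run_succ r \<sigma> Some \<xi> = Some \<circ> \<rho> \<xi>" if "\<xi> \<in> S" for \<xi>
    using legal that unfolding legal_def by (auto simp: act_def \<rho>_def fun_eq_iff)
  have g_eq: "run_succ r \<sigma> g \<xi> = g \<circ> \<rho> \<xi>" if "\<xi> \<in> S" for \<xi>
    using relabel that unfolding \<rho>_def by (auto simp: act_def fun_eq_iff)
  have \<rho>_motion: "\<forall>\<xi>\<in>S. cube_motion (\<rho> \<xi>)"
    unfolding \<rho>_def using motion S twist by (blast intro: cube_motion_comp_inv_basic_twist)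
  have Some_lim: "ev_lim r S (run_succ r \<sigma> Some) Some = ev_lim r S (\<lambda>\<xi>. Some \<circ> \<rho> \<xi>) Some"
    using Some_eq by (rule ev_lim_cong)
  show "cube_motion (the \<circ> ev_lim r S (run_succ r \<sigma> Some) Some)"
    unfolding Some_lim using \<rho>_motion lim[unfolded Some_lim] by (rule cube_motion_ev_lim[OF wo S])
  show "ev_lim r S (run_succ r \<sigma> g) g = g \<circ> (the \<circ> ev_lim r S (run_succ r \<sigma> Some) Some)"
  proof
    fix c
    obtain v where v: "ev_lim r S (\<lambda>\<xi>. Some \<circ> \<rho> \<xi>) Some c = Some v"
      using lim unfolding legal_def Some_lim by blast
    have "ev_lim r S (run_succ r \<sigma> g) g = ev_lim r S (\<lambda>\<xi>. g \<circ> \<rho> \<xi>) g"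
      using g_eq by (rule ev_lim_cong)
    then show "ev_lim r S (run_succ r \<sigma> g) g c = (g \<circ> (the \<circ> ev_lim r S (run_succ r \<sigma> Some) Some)) c"
      using ev_lim_comp[OF wo S v] v unfolding Some_lim by simp
  qed
qed

lemma run_motion:
  assumes "\<eta> \<in> Field r" "\<forall>\<zeta>. (\<zeta>, \<eta>) \<in> r \<longrightarrow> legal (run r \<sigma> Some \<zeta>)"
  shows "cube_motion (the \<circ> run r \<sigma> Some \<eta>) \<and> run r \<sigma> g \<eta> = g \<circ> (the \<circ> run r \<sigma> Some \<eta>)"
  using assms
proof (induction \<eta> rule: well_order_induct[OF wo])
  case (1 \<eta>)
  have below: "(\<zeta>, \<eta>) \<in> r" if "(\<zeta>, \<xi>) \<in> r" "\<xi> \<in> underS r \<eta>" for \<zeta> \<xi>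
    using that well_order_trans[OF wo] by (auto simp: underS_def)
  have IH: "cube_motion (the \<circ> run r \<sigma> Some \<xi>) \<and> run r \<sigma> g \<xi> = g \<circ> (the \<circ> run r \<sigma> Some \<xi>)"
    if "\<xi> \<in> underS r \<eta>" for \<xi>
    using 1(1)[OF that underS_Field[OF that]] 1(3) below[OF _ that] by blast
  have legal_below: "\<forall>\<xi>\<in>underS r \<eta>. legal (run r \<sigma> Some \<xi>)"
    using 1(3) by (auto simp: underS_def)
  have "legal (run r \<sigma> Some \<eta>)"
    using 1(3) well_order_refl[OF wo 1(2)] by blast
  then have lim: "legal (ev_lim r (underS r \<eta>) (run_succ r \<sigma> Some) Some)"
    unfolding run_at[of Some \<eta>] .
  show ?case
    unfolding run_at[of Some \<eta>] run_at[of g \<eta>]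
    using ev_lim_run_succ_motion[OF Order_Relation.underS_Field legal_below _ _ lim] IH by blast
qed

lemma terminal_motion:
  assumes "legal (terminal r \<sigma> Some)"
  shows "cube_motion (the \<circ> terminal r \<sigma> Some) \<and> terminal r \<sigma> g = g \<circ> (the \<circ> terminal r \<sigma> Some)"
proof -
  have legal: "\<forall>\<xi>\<in>Field r. legal (run r \<sigma> Some \<xi>)"
    using legal_run_if_legal_terminal[OF assms] by blast
  then have "\<forall>\<xi>\<in>Field r. cube_motion (the \<circ> run r \<sigma> Some \<xi>) \<and> run r \<sigma> g \<xi> = g \<circ> (the \<circ> run r \<sigma> Some \<xi>)"
    using run_motion by (blast dest: FieldI1)
  then show ?thesis
    using ev_lim_run_succ_motion[OF subset_refl legal] assms unfolding terminal_eq[OF wo] by blast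
qed

lemma run_succ_fixed:
  assumes "z0 \<in> Field r" "(z0, z) \<in> r" "\<forall>\<xi>. (z0, \<xi>) \<in> r \<longrightarrow> (\<xi>, z) \<in> r \<longrightarrow> \<sigma> \<xi> c = c"
  shows "run_succ r \<sigma> g z c = run_succ r \<sigma> g z0 c"
  using assms(2,3)
proof (induction z rule: well_order_induct[OF wo])
  case (1 z)
  show ?case
  proof (cases "z = z0")
    case False
    have z: "z \<in> Field r"
      using 1(2) by (rule FieldI2)
    have "\<sigma> z c = c"
      using 1(3) 1(2) well_order_refl[OF wo z] by blast
    then have inv: "inv (\<sigma> z) c = c"
      using bij_is_inj[OF bij_basic_twist[OF twist[OF z]]] by (rule inv_f_eq[rotated])
    have z0_below: "z0 \<in> underS r z"
      using 1(2) False by (simp add: underS_def)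
    have "run_succ r \<sigma> g y c = run_succ r \<sigma> g z0 c" if "y \<in> underS r z" "(z0, y) \<in> r" for y
    proof (rule 1(1)[OF that])
      have "(y, z) \<in> r"
        using that(1) by (simp add: underS_def)
      then show "\<forall>\<xi>. (z0, \<xi>) \<in> r \<longrightarrow> (\<xi>, y) \<in> r \<longrightarrow> \<sigma> \<xi> c = c"
        using 1(3) well_order_trans[OF wo] by blast
    qed
    then have "eventually (\<lambda>y. run_succ r \<sigma> g y c = run_succ r \<sigma> g z0 c) (tail_filter r (underS r z))"
      using z0_below by (subst eventually_tail_filter[OF wo Order_Relation.underS_Field]) auto
    then have "run r \<sigma> g z c = run_succ r \<sigma> g z0 c"
      unfolding run_at[of g z] using z0_below
      by (intro ev_lim_eqI[OF wo Order_Relation.underS_Field]) auto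
    then show ?thesis
      using inv by (simp add: act_def)
  qed simp
qed

lemma frequently_twist_if_None:
  assumes S: "S \<subseteq> Field r" "S \<noteq> {}" and down: "\<forall>z\<in>S. underS r z \<subseteq> S"
    and legal: "\<forall>\<xi>\<in>S. legal (run r \<sigma> Some \<xi>)"
    and None: "ev_lim r S (run_succ r \<sigma> Some) Some c = None"
  shows "\<exists>T\<in>twists_moving c. \<exists>\<^sub>F \<xi> in tail_filter r S. \<xi> \<in> S \<and> \<sigma> \<xi> = T"
proof -
  have "\<exists>\<^sub>F \<xi> in tail_filter r S. \<sigma> \<xi> c \<noteq> c"
  proof (rule ccontr)
    assume "\<not> ?thesis"
    then obtain z0 where z0: "z0 \<in> S" "\<forall>z\<in>S. (z0, z) \<in> r \<longrightarrow> \<sigma> z c = c"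
      unfolding not_frequently eventually_tail_filter[OF wo S] by auto
    have "run_succ r \<sigma> Some z c = run_succ r \<sigma> Some z0 c" if "z \<in> S" "(z0, z) \<in> r" for z
    proof (rule run_succ_fixed)
      show "z0 \<in> Field r" "(z0, z) \<in> r"
        using z0(1) S(1) that(2) by auto
      have "\<xi> \<in> S" if "(\<xi>, z) \<in> r" for \<xi>
        using that \<open>z \<in> S\<close> down by (cases "\<xi> = z") (auto simp: underS_def)
      then show "\<forall>\<xi>. (z0, \<xi>) \<in> r \<longrightarrow> (\<xi>, z) \<in> r \<longrightarrow> \<sigma> \<xi> c = c"
        using z0(2) by blast
    qed
    then have "ev_lim r S (run_succ r \<sigma> Some) Some c = run_succ r \<sigma> Some z0 c"
      using z0(1) by (intro ev_lim_eqI[OF wo S]) (auto simp: eventually_tail_filter[OF wo S])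
    moreover have "run_succ r \<sigma> Some z0 c \<noteq> None"
      using legal_act legal z0(1) unfolding legal_def by blast
    ultimately show False
      using None by simp
  qed
  then have "\<exists>\<^sub>F \<xi> in tail_filter r S. \<exists>T\<in>twists_moving c. \<xi> \<in> S \<and> \<sigma> \<xi> = T"
  proof (rule frequently_rev_mp)
    have "eventually (\<lambda>\<xi>. \<xi> \<in> S) (tail_filter r S)"
      using S by (subst eventually_tail_filter[OF wo S]) auto
    then show "eventually (\<lambda>\<xi>. \<sigma> \<xi> c \<noteq> c \<longrightarrow> (\<exists>T\<in>twists_moving c. \<xi> \<in> S \<and> \<sigma> \<xi> = T)) (tail_filter r S)"
      by (rule eventually_mono) (use basic_twist_moving twist S(1) in blast)
  qed
  then show ?thesis
    by (rule frequently_bex_finite[OF finite_twists_moving])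
qed

lemma frequently_twist_at_stable_stage:
  assumes S: "S \<subseteq> Field r" "S \<noteq> {}" and down: "\<forall>z\<in>S. underS r z \<subseteq> S"
    and no_greatest: "\<forall>m\<in>S. \<exists>z\<in>S. (z, m) \<notin> r"
    and lim: "legal (ev_lim r S (run_succ r \<sigma> g) g)"
    and freq: "\<exists>\<^sub>F \<xi> in tail_filter r S. \<xi> \<in> S \<and> \<sigma> \<xi> = T" and "finite D"
  shows "\<exists>\<xi>\<in>S. \<sigma> \<xi> = T \<and> (\<forall>d\<in>D. run_succ r \<sigma> g \<xi> d = run r \<sigma> g \<xi> d)"
proof -
  define V where "V = ev_lim r S (run_succ r \<sigma> g) g"
  let ?stable = "\<lambda>z. \<forall>d\<in>D. run_succ r \<sigma> g z d = V d"
  have "\<forall>d\<in>D. eventually (\<lambda>z. run_succ r \<sigma> g z d = V d) (tail_filter r S)"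
  proof
    fix d
    have "V d \<noteq> None"
      using lim unfolding V_def legal_def by blast
    then show "eventually (\<lambda>z. run_succ r \<sigma> g z d = V d) (tail_filter r S)"
      unfolding V_def by (rule eventually_ev_lim[OF wo S(1,2)])
  qed
  then have stable: "eventually ?stable (tail_filter r S)"
    by (rule eventually_ball_finite[OF \<open>finite D\<close>])
  have "\<exists>\<^sub>F \<xi> in tail_filter r S. (\<xi> \<in> S \<and> \<sigma> \<xi> = T) \<and> ?stable \<xi>
      \<and> underS r \<xi> \<noteq> {} \<and> eventually ?stable (tail_filter r (underS r \<xi>))"
    using frequently_eventually_frequently[OF freq
        eventually_conj[OF stable eventually_tail_filter_underS[OF wo S down no_greatest stable]]] .
  then have "\<exists>\<xi>. (\<xi> \<in> S \<and> \<sigma> \<xi> = T) \<and> ?stable \<xi>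
      \<and> underS r \<xi> \<noteq> {} \<and> eventually ?stable (tail_filter r (underS r \<xi>))"
    by (rule frequently_ex)
  then obtain \<xi> where \<xi>: "\<xi> \<in> S" "\<sigma> \<xi> = T" "?stable \<xi>" "underS r \<xi> \<noteq> {}"
    "eventually ?stable (tail_filter r (underS r \<xi>))"
    by blast
  have "run r \<sigma> g \<xi> d = V d" if "d \<in> D" for d
  proof -
    have "eventually (\<lambda>z. run_succ r \<sigma> g z d = V d) (tail_filter r (underS r \<xi>))"
      using \<xi>(5) by (rule eventually_mono) (use that in blast)
    then show ?thesis
      unfolding run_at[of g \<xi>] by (rule ev_lim_eqI[OF wo Order_Relation.underS_Field \<xi>(4)])
  qed
  then show ?thesis
    using \<xi>(1-3) by auto
qed

text \<open>The heart of the argument: a twist applied cofinally below a limit where the solved run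
  converges would leave the colours of a ring of edge cells invariant.\<close>
lemma not_frequently_twist_if_solved:
  assumes S: "S \<subseteq> Field r" "S \<noteq> {}" and down: "\<forall>z\<in>S. underS r z \<subseteq> S"
    and no_greatest: "\<forall>m\<in>S. \<exists>z\<in>S. (z, m) \<notin> r"
    and legal: "\<forall>\<xi>\<in>S. legal (run r \<sigma> Some \<xi>)"
    and solved: "legal (ev_lim r S (run_succ r \<sigma> f_solved) f_solved)"
    and T: "T \<in> twists_moving c"
  shows "\<not> (\<exists>\<^sub>F \<xi> in tail_filter r S. \<xi> \<in> S \<and> \<sigma> \<xi> = T)"
proof
  assume freq: "\<exists>\<^sub>F \<xi> in tail_filter r S. \<xi> \<in> S \<and> \<sigma> \<xi> = T"
  define a where "a j = coord_of j (point_of c)" for j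
  obtain j n where Tjn: "T = quarter_turn j (a j) ^^ n" "n \<in> {1, 2, 3}"
    using T unfolding twists_moving_def a_def by blast
  obtain \<xi> where \<xi>: "\<xi> \<in> S" "\<sigma> \<xi> = T"
    "\<forall>d\<in>ring_cells j (a j). run_succ r \<sigma> f_solved \<xi> d = run r \<sigma> f_solved \<xi> d"
    using frequently_twist_at_stable_stage[OF S down no_greatest solved freq finite_ring_cells] by blast
  have "\<forall>\<zeta>. (\<zeta>, \<xi>) \<in> r \<longrightarrow> legal (run r \<sigma> Some \<zeta>)"
  proof (intro allI impI)
    fix \<zeta> assume "(\<zeta>, \<xi>) \<in> r"
    then have "\<zeta> \<in> S"
      using down \<xi>(1) by (cases "\<zeta> = \<xi>") (auto simp: underS_def)
    then show "legal (run r \<sigma> Some \<zeta>)"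
      using legal by blast
  qed
  then obtain \<rho> where \<rho>: "cube_motion \<rho>" "run r \<sigma> f_solved \<xi> = f_solved \<circ> \<rho>"
    using run_motion \<xi>(1) S(1) by blast
  have "f_solved (\<rho> (inv (quarter_turn j (a j) ^^ n) d)) = f_solved (\<rho> d)"
    if "d \<in> ring_cells j (a j)" for d
  proof -
    have "f_solved (\<rho> (inv (quarter_turn j (a j) ^^ n) d)) = run_succ r \<sigma> f_solved \<xi> d"
      using \<rho>(2) \<xi>(2) Tjn(1) by (simp add: act_def)
    also have "\<dots> = run r \<sigma> f_solved \<xi> d"
      using \<xi>(3) that by simp
    finally show ?thesis
      using \<rho>(2) by simp
  qed
  then show False
    using cube_motion_ring_colours[OF \<rho>(1) Tjn(2)] by blast
qed

lemma legal_limit_if_solved: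
  assumes S: "S \<subseteq> Field r" and down: "\<forall>z\<in>S. underS r z \<subseteq> S"
    and legal: "\<forall>\<xi>\<in>S. legal (run r \<sigma> Some \<xi>)"
    and solved: "legal (ev_lim r S (run_succ r \<sigma> f_solved) f_solved)"
  shows "legal (ev_lim r S (run_succ r \<sigma> Some) Some)"
proof (cases "\<exists>m\<in>S. \<forall>z\<in>S. (z, m) \<in> r")
  case True
  then obtain m where m: "m \<in> S" "\<forall>z\<in>S. (z, m) \<in> r"
    by blast
  then have "legal (run_succ r \<sigma> Some m)"
    using legal by (blast intro: legal_act)
  then show ?thesis
    unfolding ev_lim_greatest[OF wo S m] .
next
  case False
  show ?thesis
  proof (cases "S = {}")
    case True
    then show ?thesis
      by (simp add: legal_def)
  next
    case ne: False
    have no_greatest: "\<forall>m\<in>S. \<exists>z\<in>S. (z, m) \<notin> r"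
      using False by blast
    show ?thesis
      unfolding legal_def
    proof (intro allI notI)
      fix c
      assume "ev_lim r S (run_succ r \<sigma> Some) Some c = None"
      then obtain T where "T \<in> twists_moving c" "\<exists>\<^sub>F \<xi> in tail_filter r S. \<xi> \<in> S \<and> \<sigma> \<xi> = T"
        using frequently_twist_if_None[OF S ne down legal] by blast
      then show False
        using not_frequently_twist_if_solved[OF S ne down no_greatest legal solved] by blast
    qed
  qed
qed

lemma legal_run_if_solved:
  assumes solved: "legal (terminal r \<sigma> f_solved)"
  shows "\<eta> \<in> Field r \<Longrightarrow> legal (run r \<sigma> Some \<eta>)"
proof (induction \<eta> rule: well_order_induct[OF wo])
  case (1 \<eta>)
  have "legal (ev_lim r (underS r \<eta>) (run_succ r \<sigma> Some) Some)"
  proof (rule legal_limit_if_solved[OF Order_Relation.underS_Field])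
    show "\<forall>z\<in>underS r \<eta>. underS r z \<subseteq> underS r \<eta>"
    proof (intro ballI subsetI)
      fix z y assume z: "z \<in> underS r \<eta>" and "y \<in> underS r z"
      then have "(y, z) \<in> r"
        by (simp add: underS_def)
      then show "y \<in> underS r \<eta>"
        by (rule underS_trans[OF wo z])
    qed
    show "\<forall>\<xi>\<in>underS r \<eta>. legal (run r \<sigma> Some \<xi>)"
    proof
      fix \<xi> assume \<xi>: "\<xi> \<in> underS r \<eta>"
      show "legal (run r \<sigma> Some \<xi>)"
        using 1(1)[OF \<xi> underS_Field[OF \<xi>]] .
    qed
    show "legal (ev_lim r (underS r \<eta>) (run_succ r \<sigma> f_solved) f_solved)"
      using legal_run_if_legal_terminal[OF solved 1(2)] unfolding run_at[of f_solved \<eta>] .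
  qed
  then show ?case
    unfolding run_at[of Some \<eta>] .
qed

lemma legal_terminal_if_solved:
  assumes solved: "legal (terminal r \<sigma> f_solved)"
  shows "legal (terminal r \<sigma> Some)"
  unfolding terminal_eq[OF wo]
proof (rule legal_limit_if_solved[OF subset_refl])
  show "\<forall>z\<in>Field r. underS r z \<subseteq> Field r"
    by (simp add: Order_Relation.underS_Field)
  show "\<forall>\<xi>\<in>Field r. legal (run r \<sigma> Some \<xi>)"
    using legal_run_if_solved[OF solved] by blast
  show "legal (ev_lim r (Field r) (run_succ r \<sigma> f_solved) f_solved)"
    using solved unfolding terminal_eq[OF wo] .
qed

end

lemma perm_order_props:
  assumes "\<pi> permutes {1..24::nat}"
  shows "0 < perm_order \<pi> \<and> \<pi> ^^ perm_order \<pi> = id"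
proof -
  obtain n where "\<pi> ^^ n = id" "n > 0"
    by (rule permutation_is_nilpotent[OF permutes_imp_permutation[OF _ assms]]) simp
  then have "\<exists>n. 0 < n \<and> \<pi> ^^ n = id"
    by blast
  then show ?thesis
    unfolding perm_order_def by (rule LeastI_ex)
qed

lemma k24_pos: "0 < k24"
proof -
  let ?orders = "{perm_order \<pi> | \<pi>. \<pi> permutes {1..24::nat}}"
  have "finite ?orders"
    using finite_permutations[of "{1..24::nat}"] by (simp add: setcompr_eq_image)
  moreover have "0 \<notin> ?orders"
    using perm_order_props by fastforce
  ultimately have "Lcm ?orders \<noteq> 0"
    using Lcm_0_iff by blast
  then show ?thesis
    unfolding k24_def by simp
qed

lemma permutes_funpow_k24:
  assumes "\<pi> permutes {1..24::nat}"
  shows "\<pi> ^^ k24 = id"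
proof -
  have "perm_order \<pi> dvd k24"
    unfolding k24_def using assms by (intro dvd_Lcm) blast
  then obtain t where "k24 = perm_order \<pi> * t"
    by (rule dvdE)
  then have "\<pi> ^^ k24 = (\<pi> ^^ perm_order \<pi>) ^^ t"
    by (simp only: funpow_mult)
  then show ?thesis
    using perm_order_props[OF assms] by simp
qed

text \<open>Transport \<open>f\<close> to a permutation of \<open>{1..card K} \<subseteq> {1..24}\<close> along a bijection \<open>h\<close>.\<close>
lemma bij_betw_funpow_k24:
  assumes K: "finite K" "card K \<le> 24" and f: "bij_betw f K K" and x: "x \<in> K"
  shows "(f ^^ k24) x = x"
proof -
  let ?I = "{1..card K}"
  obtain h where h: "bij_betw h ?I K"
    using ex_bij_betw_nat_finite_1[OF K(1)] by blast
  define \<pi> where "\<pi> i = (if i \<in> ?I then inv_into ?I h (f (h i)) else i)" for i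
  have f_h: "f (h i) \<in> K" if "i \<in> ?I" for i
    using bij_betwE[OF f] bij_betwE[OF h] that by blast
  have \<pi>_I: "\<pi> i \<in> ?I" and h_\<pi>: "h (\<pi> i) = f (h i)" if "i \<in> ?I" for i
    using that f_h[OF that] bij_betw_inv_into_right[OF h] bij_betwE[OF bij_betw_inv_into[OF h]]
    unfolding \<pi>_def by auto
  have "bij_betw \<pi> ?I ?I"
  proof -
    have "bij_betw (inv_into ?I h \<circ> f \<circ> h) ?I ?I"
      using bij_betw_trans[OF bij_betw_trans[OF h f] bij_betw_inv_into[OF h]] by (simp add: comp_assoc)
    then show ?thesis
      by (rule bij_betw_cong[THEN iffD1, rotated]) (simp add: \<pi>_def)
  qed
  then have "\<pi> permutes ?I"
    by (rule bij_imp_permutes) (auto simp: \<pi>_def)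
  then have "\<pi> permutes {1..24}"
    by (rule permutes_subset) (use K(2) in auto)
  then have \<pi>_k24: "\<pi> ^^ k24 = id"
    by (rule permutes_funpow_k24)
  have conj: "(f ^^ m) (h i) = h ((\<pi> ^^ m) i)" if "i \<in> ?I" for m i
  proof (induction m)
    case (Suc m)
    have "(\<pi> ^^ m) i \<in> ?I"
      using that \<pi>_I by (induction m) auto
    then show ?case
      using Suc h_\<pi> by simp
  qed simp
  define i where "i = inv_into ?I h x"
  have i: "i \<in> ?I" "h i = x"
    unfolding i_def using bij_betwE[OF bij_betw_inv_into[OF h]] x bij_betw_inv_into_right[OF h x] by auto
  have "(f ^^ k24) (h i) = h i"
    using conj[OF i(1), of k24] \<pi>_k24 by simp
  then show ?thesis
    using i(2) by simp
qed

lemma cube_motion_funpow_k24: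
  assumes "cube_motion \<rho>"
  shows "\<rho> ^^ k24 = id"
proof
  fix c
  have maps: "\<rho> ` turn_orbit c \<subseteq> turn_orbit c"
    using assms turn_orbit_trans unfolding cube_motion_def by blast
  have "inj \<rho>"
    using assms by (simp add: cube_motion_def)
  then have inj: "inj_on \<rho> (turn_orbit c)"
    by (rule inj_on_subset) simp
  have "bij_betw \<rho> (turn_orbit c) (turn_orbit c)"
    using endo_inj_surj[OF finite_turn_orbit maps inj] inj by (simp add: bij_betw_def)
  then show "(\<rho> ^^ k24) c = id c"
    by (simp add: bij_betw_funpow_k24[OF finite_turn_orbit card_turn_orbit _ turn_orbit_self])
qed

lemma Field_ord_mult_nat:
  assumes "Well_order r"
  shows "Field (ord_mult_nat r m) = Field r \<times> {..<m}"
proof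
  show "Field (ord_mult_nat r m) \<subseteq> Field r \<times> {..<m}"
    unfolding ord_mult_nat_def Field_def by auto
  show "Field r \<times> {..<m} \<subseteq> Field (ord_mult_nat r m)"
  proof
    fix p assume "p \<in> Field r \<times> {..<m}"
    then have "(p, p) \<in> ord_mult_nat r m"
      using well_order_refl[OF assms] by (auto simp: ord_mult_nat_def)
    then show "p \<in> Field (ord_mult_nat r m)"
      by (rule FieldI1)
  qed
qed

lemma well_order_ord_mult_nat:
  assumes wo: "Well_order r"
  shows "Well_order (ord_mult_nat r m)"
proof -
  let ?r = "ord_mult_nat r m"
  have F: "Field ?r = Field r \<times> {..<m}"
    by (rule Field_ord_mult_nat[OF wo])
  have "?r \<subseteq> Field ?r \<times> Field ?r"
    by (auto simp: Field_def)
  moreover have "refl_on (Field ?r) ?r"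
    unfolding refl_on_def F by (auto simp: ord_mult_nat_def well_order_refl[OF wo] Field_def)
  moreover have "trans ?r"
    unfolding trans_def ord_mult_nat_def using well_order_trans[OF wo] by auto
  moreover have "antisym ?r"
    unfolding antisym_def ord_mult_nat_def using well_order_antisym[OF wo] by auto
  moreover have "total_on (Field ?r) ?r"
    unfolding total_on_def F using well_order_total[OF wo] by (auto simp: ord_mult_nat_def)
  moreover have "?r - Id \<subseteq> inv_image (less_than <*lex*> (r - Id)) (\<lambda>(a, i). (i, a))"
    unfolding ord_mult_nat_def by auto
  then have "wf (?r - Id)"
    by (rule wf_subset[rotated]) (intro wf_inv_image wf_lex_prod wf_less_than wo_rel.WF[unfolded wo_rel_def, OF wo])
  ultimately show ?thesis
    unfolding well_order_on_def linear_order_on_def partial_order_on_def preorder_on_def by blast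
qed

lemma underS_ord_mult_nat:
  assumes "Well_order r" "a \<in> Field r" "i < m"
  shows "underS (ord_mult_nat r m) (a, i) = (Field r \<times> {..<i}) \<union> (\<lambda>b. (b, i)) ` underS r a"
  using assms by (auto simp: underS_def ord_mult_nat_def Field_def)

lemma eventually_tail_filter_final_segment:
  assumes wo: "Well_order r" "Well_order r'" and S: "S \<subseteq> Field r" "S \<noteq> {}" "S' \<subseteq> Field r'"
    and im: "e ` S \<subseteq> S'"
    and iso: "\<forall>x\<in>S. \<forall>y\<in>S. (e x, e y) \<in> r' \<longleftrightarrow> (x, y) \<in> r"
    and final: "\<forall>s\<in>S'. s \<notin> e ` S \<longrightarrow> (\<forall>x\<in>S. (s, e x) \<in> r')"
  shows "eventually P (tail_filter r' S') \<longleftrightarrow> eventually (\<lambda>x. P (e x)) (tail_filter r S)"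
proof -
  have "S' \<noteq> {}"
    using S(2) im by blast
  have "(\<exists>z0\<in>S'. \<forall>z\<in>S'. (z0, z) \<in> r' \<longrightarrow> P z) \<longleftrightarrow> (\<exists>x0\<in>S. \<forall>x\<in>S. (x0, x) \<in> r \<longrightarrow> P (e x))"
  proof
    assume "\<exists>z0\<in>S'. \<forall>z\<in>S'. (z0, z) \<in> r' \<longrightarrow> P z"
    then obtain z0 where z0: "z0 \<in> S'" "\<forall>z\<in>S'. (z0, z) \<in> r' \<longrightarrow> P z"
      by blast
    show "\<exists>x0\<in>S. \<forall>x\<in>S. (x0, x) \<in> r \<longrightarrow> P (e x)"
    proof (cases "z0 \<in> e ` S")
      case True
      then obtain x0 where "x0 \<in> S" "z0 = e x0"
        by blast
      then show ?thesis
        using z0(2) iso im by blast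
    next
      case False
      then have "P (e x)" if "x \<in> S" for x
        using z0 final im that by blast
      then show ?thesis
        using S(2) by blast
    qed
  next
    assume "\<exists>x0\<in>S. \<forall>x\<in>S. (x0, x) \<in> r \<longrightarrow> P (e x)"
    then obtain x0 where x0: "x0 \<in> S" "\<forall>x\<in>S. (x0, x) \<in> r \<longrightarrow> P (e x)"
      by blast
    have "P z" if z: "z \<in> S'" "(e x0, z) \<in> r'" for z
    proof (cases "z \<in> e ` S")
      case True
      then show ?thesis
        using iso x0 z by auto
    next
      case False
      then have "z = e x0"
        using final z x0(1) well_order_antisym[OF wo(2)] by blast
      then show ?thesis
        using False x0(1) by blast
    qed
    then show "\<exists>z0\<in>S'. \<forall>z\<in>S'. (z0, z) \<in> r' \<longrightarrow> P z"
      using im x0(1) by blast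
  qed
  then show ?thesis
    unfolding eventually_tail_filter[OF wo(2) S(3) \<open>S' \<noteq> {}\<close>] eventually_tail_filter[OF wo(1) S(1,2)] .
qed

lemma ev_lim_final_segment:
  assumes wo: "Well_order r" "Well_order r'" and S: "S \<subseteq> Field r" "S \<noteq> {}" "S' \<subseteq> Field r'"
    and im: "e ` S \<subseteq> S'"
    and iso: "\<forall>x\<in>S. \<forall>y\<in>S. (e x, e y) \<in> r' \<longleftrightarrow> (x, y) \<in> r"
    and final: "\<forall>s\<in>S'. s \<notin> e ` S \<longrightarrow> (\<forall>x\<in>S. (s, e x) \<in> r')"
    and G: "\<forall>x\<in>S. G' (e x) = G x"
  shows "ev_lim r' S' G' d' = ev_lim r S G d"
proof
  fix c
  have "S' \<noteq> {}"
    using S(2) im by blast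
  obtain x0 where "x0 \<in> S"
    using S(2) by blast
  have "eventually (\<lambda>x. x \<in> S) (tail_filter r S)"
    using eventually_tail_filter_ge[OF wo(1) S(1) \<open>x0 \<in> S\<close>] by (rule eventually_mono) simp
  then have "eventually (\<lambda>z. G' z c = v) (tail_filter r' S') \<longleftrightarrow> eventually (\<lambda>x. G x c = v) (tail_filter r S)"
    for v
    unfolding eventually_tail_filter_final_segment[OF assms(1-8)] by (rule eventually_cong) (simp add: G)
  then show "ev_lim r' S' G' d' c = ev_lim r S G d c"
    unfolding ev_lim_eventually[OF wo(2) S(3) \<open>S' \<noteq> {}\<close>] ev_lim_eventually[OF wo(1) S(1,2)] by simp
qed

lemma ev_lim_ord_mult_nat_last_copy:
  assumes wo: "Well_order r" and S: "S \<subseteq> Field r" "S \<noteq> {}" and "i < m"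
    and B: "B \<subseteq> Field r \<times> {..<i}"
  shows "ev_lim (ord_mult_nat r m) (B \<union> (\<lambda>b. (b, i)) ` S) G' d' = ev_lim r S (\<lambda>b. G' (b, i)) d"
proof (rule ev_lim_final_segment[OF wo well_order_ord_mult_nat[OF wo] S])
  show "B \<union> (\<lambda>b. (b, i)) ` S \<subseteq> Field (ord_mult_nat r m)"
    using S(1) B \<open>i < m\<close> by (auto simp: Field_ord_mult_nat[OF wo])
  show "\<forall>x\<in>S. \<forall>y\<in>S. ((x, i), y, i) \<in> ord_mult_nat r m \<longleftrightarrow> (x, y) \<in> r"
    using S(1) \<open>i < m\<close> by (auto simp: ord_mult_nat_def)
  show "\<forall>s\<in>B \<union> (\<lambda>b. (b, i)) ` S. s \<notin> (\<lambda>b. (b, i)) ` S \<longrightarrow> (\<forall>x\<in>S. (s, x, i) \<in> ord_mult_nat r m)"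
    using S(1) B \<open>i < m\<close> by (auto simp: ord_mult_nat_def)
qed auto

lemma ev_lim_ord_mult_nat_copy:
  assumes wo: "Well_order r" and "Field r \<noteq> {}" "j < m"
  shows "ev_lim (ord_mult_nat r m) (Field r \<times> {..<Suc j}) G' d' = ev_lim r (Field r) (\<lambda>b. G' (b, j)) d"
proof -
  have "Field r \<times> {..<Suc j} = Field r \<times> {..<j} \<union> (\<lambda>b. (b, j)) ` Field r"
    by auto
  then show ?thesis
    using assms by (simp add: ev_lim_ord_mult_nat_last_copy)
qed

lemma run_least: "Well_order r \<Longrightarrow> underS r a = {} \<Longrightarrow> run r \<sigma> g a = g"
  by (simp add: run_eq[of r \<sigma> g a])

lemma is_run_ord_mult_nat:
  assumes wo: "Well_order r"
  shows "is_run (ord_mult_nat r m) (\<lambda>(a, i). \<sigma> a) g (\<lambda>(a, i). run r \<sigma> ((terminal r \<sigma> ^^ i) g) a)"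
    (is "is_run ?r ?\<tau> g ?F")
  unfolding is_run_def Field_ord_mult_nat[OF wo]
proof
  fix \<eta> assume "\<eta> \<in> Field r \<times> {..<m}"
  then obtain a i where \<eta>: "\<eta> = (a, i)" and a: "a \<in> Field r" and "i < m"
    by blast
  define g' where "g' i = (terminal r \<sigma> ^^ i) g" for i
  have step: "(\<lambda>b. act (?\<tau> (b, j)) (?F (b, j))) = run_succ r \<sigma> (g' j)" for j
    by (simp add: g'_def)
  have "?F (a, i) = ev_lim ?r (underS ?r (a, i)) (\<lambda>\<zeta>. act (?\<tau> \<zeta>) (?F \<zeta>)) g"
  proof (cases "underS r a = {}")
    case False
    have "ev_lim ?r (underS ?r (a, i)) (\<lambda>\<zeta>. act (?\<tau> \<zeta>) (?F \<zeta>)) g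
        = ev_lim r (underS r a) (\<lambda>b. act (?\<tau> (b, i)) (?F (b, i))) (g' i)"
      unfolding underS_ord_mult_nat[OF wo a \<open>i < m\<close>]
      by (rule ev_lim_ord_mult_nat_last_copy[OF wo Order_Relation.underS_Field False \<open>i < m\<close> subset_refl])
    also have "\<dots> = run r \<sigma> (g' i) a"
      unfolding step run_eq[OF wo, of \<sigma> "g' i" a] ..
    finally show ?thesis
      by (simp add: g'_def)
  next
    case True
    then have "?F (a, i) = g' i"
      by (simp add: run_least[OF wo] g'_def)
    moreover have "ev_lim ?r (underS ?r (a, i)) (\<lambda>\<zeta>. act (?\<tau> \<zeta>) (?F \<zeta>)) g = g' i"
    proof (cases i)
      case 0
      then have "underS ?r (a, i) = {}"
        using True underS_ord_mult_nat[OF wo a \<open>i < m\<close>] by simp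
      then show ?thesis
        using 0 by (simp add: g'_def)
    next
      case (Suc j)
      then have "underS ?r (a, i) = Field r \<times> {..<Suc j}"
        using True underS_ord_mult_nat[OF wo a \<open>i < m\<close>] by simp
      have "Field r \<noteq> {}" "j < m"
        using a \<open>i < m\<close> Suc by auto
      then have "ev_lim ?r (Field r \<times> {..<Suc j}) (\<lambda>\<zeta>. act (?\<tau> \<zeta>) (?F \<zeta>)) g
          = ev_lim r (Field r) (\<lambda>b. act (?\<tau> (b, j)) (?F (b, j))) (g' j)"
        by (intro ev_lim_ord_mult_nat_copy[OF wo])
      also have "\<dots> = terminal r \<sigma> (g' j)"
        unfolding step terminal_eq[OF wo] ..
      finally show ?thesis
        using \<open>underS ?r (a, i) = _\<close> Suc by (simp add: g'_def)
    qed
    ultimately show ?thesis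
      by simp
  qed
  then show "?F \<eta> = ev_lim ?r (underS ?r \<eta>) (\<lambda>\<zeta>. act (?\<tau> \<zeta>) (?F \<zeta>)) g"
    unfolding \<eta> .
qed

lemma terminal_ord_mult_nat:
  assumes wo: "Well_order r"
  shows "terminal (ord_mult_nat r m) (\<lambda>(a, i). \<sigma> a) g = (terminal r \<sigma> ^^ m) g"
proof -
  define G where "G = (\<lambda>(a, i). act (\<sigma> a) (run r \<sigma> ((terminal r \<sigma> ^^ i) g) a))"
  have "terminal (ord_mult_nat r m) (\<lambda>(a, i). \<sigma> a) g = ev_lim (ord_mult_nat r m) (Field r \<times> {..<m}) G g"
    using terminal_is_run[OF well_order_ord_mult_nat[OF wo] is_run_ord_mult_nat[OF wo]]
    unfolding Field_ord_mult_nat[OF wo] G_def by (simp add: case_prod_beta')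
  also have "\<dots> = (terminal r \<sigma> ^^ m) g"
  proof (cases "Field r = {} \<or> m = 0")
    case True
    have "(terminal r \<sigma> ^^ m) g = g"
    proof (cases "m = 0")
      case False
      then have id: "terminal r \<sigma> h = h" for h
        using True by (simp add: terminal_eq[OF wo])
      show ?thesis
        by (induction m) (simp_all add: id)
    qed simp
    then show ?thesis
      using True by auto
  next
    case False
    then obtain j where m: "m = Suc j"
      using not0_implies_Suc by blast
    have "ev_lim (ord_mult_nat r m) (Field r \<times> {..<m}) G g
        = ev_lim r (Field r) (\<lambda>b. G (b, j)) ((terminal r \<sigma> ^^ j) g)"
      unfolding m using False m by (intro ev_lim_ord_mult_nat_copy[OF wo]) auto
    also have "\<dots> = (terminal r \<sigma> ^^ m) g"
      using m by (simp add: G_def terminal_eq[OF wo])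
    finally show ?thesis .
  qed
  finally show ?thesis .
qed

lemma basic_seq_ord_mult_nat:
  assumes "basic_seq r \<sigma>"
  shows "basic_seq (ord_mult_nat r m) (\<lambda>(a, i). \<sigma> a)"
  using assms well_order_ord_mult_nat Field_ord_mult_nat unfolding basic_seq_def by fastforce

context basic_sequence
begin

lemma convergent_solved_iff_universally:
  "convergent_over r \<sigma> f_solved \<longleftrightarrow> universally_convergent r \<sigma>"
proof
  assume "universally_convergent r \<sigma>"
  then have "terminal r \<sigma> f_solved = f_solved \<circ> (the \<circ> terminal r \<sigma> Some)"
    using terminal_motion unfolding universally_convergent_def convergent_over_def id_labelling_eq_Some
    by blast
  then show "convergent_over r \<sigma> f_solved"
    by (simp add: convergent_over_def legal_def f_solved_def)
qed (use legal_terminal_if_solved in \<open>simp add: convergent_over_def universally_convergent_def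
    id_labelling_eq_Some\<close>)

lemma terminal_funpow_k24:
  assumes "convergent_over r \<sigma> f_solved"
  shows "(terminal r \<sigma> ^^ k24) f_solved = f_solved"
proof -
  define \<rho> where "\<rho> = the \<circ> terminal r \<sigma> Some"
  have legal: "legal (terminal r \<sigma> Some)"
    using assms legal_terminal_if_solved unfolding convergent_over_def by blast
  have relabel: "terminal r \<sigma> g = g \<circ> \<rho>" for g :: "('l, color) labelling"
    using terminal_motion[OF legal] unfolding \<rho>_def by blast
  have "(terminal r \<sigma> ^^ i) f_solved = f_solved \<circ> \<rho> ^^ i" for i
  proof (induction i)
    case (Suc i)
    have "(terminal r \<sigma> ^^ Suc i) f_solved = (f_solved \<circ> \<rho> ^^ i) \<circ> \<rho>"
      by (simp only: funpow.simps(2) comp_apply relabel Suc.IH) (simp add: comp_def)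
    then show ?case
      by (simp only: funpow_Suc_right comp_assoc)
  qed simp
  moreover have "\<rho> ^^ k24 = id"
    using terminal_motion[OF legal] unfolding \<rho>_def by (blast intro: cube_motion_funpow_k24)
  ultimately show ?thesis
    by simp
qed

end

theorem theorem4p3:
  fixes r :: "'i rel" and \<sigma> :: "'i \<Rightarrow> 'l cell \<Rightarrow> 'l cell"
  assumes L_inf: "infinite (UNIV :: 'l set)"
    and bs: "basic_seq r \<sigma>"
  shows "(convergent_over r \<sigma> f_solved \<longleftrightarrow> universally_convergent r \<sigma>)
    \<and> (convergent_over r \<sigma> f_solved \<longrightarrow>
         (\<exists>(r' :: ('i \<times> nat) rel) \<tau>. basic_seq r' \<tau>
            \<and> (r', ord_mult_nat r (k24 - 1)) \<in> ordLeq
            \<and> terminal r' \<tau> (terminal r \<sigma> f_solved) = f_solved))"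
proof -
  interpret basic_sequence r \<sigma>
    by (rule basic_sequence.intro[OF bs])
  have "terminal (ord_mult_nat r (k24 - 1)) (\<lambda>(a, i). \<sigma> a) (terminal r \<sigma> f_solved) = f_solved"
    if "convergent_over r \<sigma> f_solved"
  proof -
    have "(terminal r \<sigma> ^^ (k24 - 1)) (terminal r \<sigma> f_solved) = (terminal r \<sigma> ^^ k24) f_solved"
      using k24_pos by (metis Suc_diff_1 funpow_Suc_right comp_apply)
    then show ?thesis
      using terminal_funpow_k24[OF that] by (simp add: terminal_ord_mult_nat[OF wo])
  qed
  moreover have "(ord_mult_nat r (k24 - 1), ord_mult_nat r (k24 - 1)) \<in> ordLeq"
    using ordLeq_reflexive[OF well_order_ord_mult_nat[OF wo]] .
  ultimately show ?thesis
    using convergent_solved_iff_universally basic_seq_ord_mult_nat[OF bs] by blast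
qed

end
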